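(* Let $A=kQ_A/I_A$ be a radical square zero algebra and let $B=kQ_B/I_B$ be a radical embedding of $A$ obtained by gluing two idempotents $e_1$ and $e_n$ of $A$. If $\mathrm{char}(k)\neq 2$, then we have $$\mathrm{dim}_k\mathrm{HH}^{1}(A)=\mathrm{dim}_k\mathrm{HH}^{1}(B)-1-\mathrm{kspp}(1,n)-c_B+c_A.$$ In particular, if we glue $e_1$ and $e_n$ from the same block of $A$, then $$\mathrm{dim}_k\mathrm{HH}^{1}(A)=\mathrm{dim}_k\mathrm{HH}^{1}(B)-1-\mathrm{kspp}(1,n);$$ if we glue $e_1$ and $e_n$ from two different blocks of $A$, then $$\mathrm{dim}_k\mathrm{HH}^{1}(A)=\mathrm{dim}_k\mathrm{HH}^{1}(B)-\mathrm{kspp}(1,n)$$ and then $\mathrm{HH}^{1}(A)\simeq \mathrm{HH}^{1}(B)$ as Lie algebras if we exclude the case that there are loops both at $e_1$ and $e_n$. Moreover, if one of the following conditions holds, then these dimension formulas and (in the different-blocks case without loops at both $e_1$ and $e_n$) the Lie algebra isomorphism $\mathrm{HH}^{1}(A)\simeq \mathrm{HH}^{1}(B)$ still hold in the case $\mathrm{char}(k)=2$: \begin{itemize} \item[$(i)$] glue $e_1$ and $e_n$ from the same block of $A$; \item[$(ii)$] glue $e_1\in A_1$ and $e_n\in A_2$ from the different blocks $A_1,A_2$ of $A$ such that both $A_1$ and $A_2$ are not isomorphic to $k[x]/(x^2)$. \end{itemize}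
   Context: $k$ is a field, $A=kQ_A/I_A$ is a finite dimensional algebra with $Q_A$ a finite quiver with vertices $e_1,\dots,e_n$ and $I_A$ admissible; here $A$ is radical square zero (so monomial). We assume $e_1\neq e_n$ and neither is an isolated vertex. $B$ is obtained by gluing $e_1$ and $e_n$: $B$ is the subalgebra of $A$ generated by $f_1=e_1+e_n$, $f_i=e_i$ ($2\le i\le n-1$) and all arrows; $Q_B$ is obtained from $Q_A$ by identifying $e_1,e_n$ into the vertex $f_1$, each arrow $\alpha$ of $Q_A$ corresponding to an arrow $\alpha^*$ of $Q_B$ and each path $p$ to $p^*$; $I_B$ is generated by $I_A$ and all newly formed length-2 paths through $f_1$. $c_A,c_B$ denote the numbers of connected components of $Q_A,Q_B$. For a monomial algebra $\Lambda=kQ/\langle Z\rangle$ ($Z$ a minimal set of monomial relations), $\mathcal{B}$ is the basis of paths containing no element of $Z$, $X\|Y$ denotes pairs of parallel paths, and $\delta^1:k(Q_1\|\mathcal{B})\to k(Z\|\mathcal{B})$, $a\|\gamma\mapsto\sum_{r\in Z} r\|r^{a\|\gamma}$, where $r^{a\|\gamma}$ is the sum of paths in $\mathcal{B}$ obtained by replacing each occurrence of $a$ in $r$ by $\gamma$; $\mathrm{HH}^1(\Lambda)\simeq \mathrm{Ker}(\delta^1)/\mathrm{Im}(\delta^0)$ as Lie algebras. A pair $(\alpha,p)$ with $\alpha$ an arrow of $Q_A$ and $p\in\mathcal{B}_A$ is a special pair if $\alpha$ starts or ends at $e_1$ or $e_n$, $\alpha^*$ is parallel to $p^*$ in $Q_B$,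 and $\alpha$ is not parallel to $p$ in $Q_A$. $Z_{spp}$ is the intersection of the span of all $\alpha^*\|p^*$ for special pairs $(\alpha,p)$ with $\mathrm{Ker}(\delta^1_B)$, and $\mathrm{kspp}(1,n)=\dim_k Z_{spp}$. *)

theory Defs
  imports Complex_Main "HOL-Library.Sublist" "HOL-Library.Function_Algebras"
begin

record ('v, 'a) quiver =
  verts :: "'v set"
  arrs  :: "'a set"
  src   :: "'a \<Rightarrow> 'v"
  tgt   :: "'a \<Rightarrow> 'v"

text \<open>A path is a start vertex together with a list of arrows a1 a2 ... am,
  composed left to right (tgt a_i = src a_(i+1)).  A trivial path (v, []) is the
  idempotent e_v.\<close>
type_synonym ('v, 'a) path = "'v \<times> 'a list"

definition is_path :: "('v, 'a) quiver \<Rightarrow> ('v, 'a) path \<Rightarrow> bool" where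
  "is_path Q p \<longleftrightarrow> fst p \<in> verts Q \<and> set (snd p) \<subseteq> arrs Q
     \<and> (snd p \<noteq> [] \<longrightarrow> src Q (hd (snd p)) = fst p)
     \<and> (\<forall>i. Suc i < length (snd p) \<longrightarrow> tgt Q (snd p ! i) = src Q (snd p ! Suc i))"

definition pend :: "('v, 'a) quiver \<Rightarrow> ('v, 'a) path \<Rightarrow> 'v" where
  "pend Q p = (if snd p = [] then fst p else tgt Q (last (snd p)))"

text \<open>The basis \<B> of a monomial algebra kQ/<Z>: paths containing no element of Z.\<close>
definition basis :: "('v, 'a) quiver \<Rightarrow> ('v, 'a) path set \<Rightarrow> ('v, 'a) path set" where
  "basis Q Z = {p. is_path Q p \<and> \<not> (\<exists>r\<in>Z. sublist (snd r) (snd p))}"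

definition Q0B :: "('v, 'a) quiver \<Rightarrow> ('v, 'a) path set \<Rightarrow> ('v \<times> ('v, 'a) path) set" where
  "Q0B Q Z = {(e, \<gamma>). e \<in> verts Q \<and> \<gamma> \<in> basis Q Z \<and> fst \<gamma> = e \<and> pend Q \<gamma> = e}"

definition Q1B :: "('v, 'a) quiver \<Rightarrow> ('v, 'a) path set \<Rightarrow> ('a \<times> ('v, 'a) path) set" where
  "Q1B Q Z = {(a, \<gamma>). a \<in> arrs Q \<and> \<gamma> \<in> basis Q Z \<and> fst \<gamma> = src Q a \<and> pend Q \<gamma> = tgt Q a}"

definition ZB :: "('v, 'a) quiver \<Rightarrow> ('v, 'a) path set \<Rightarrow> (('v, 'a) path \<times> ('v, 'a) path) set" where
  "ZB Q Z = {(r, \<gamma>). r \<in> Z \<and> \<gamma> \<in> basis Q Z \<and> fst \<gamma> = fst r \<and> pend Q \<gamma> = pend Q r}"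

definition replace_at :: "('v, 'a) path \<Rightarrow> nat \<Rightarrow> ('v, 'a) path \<Rightarrow> ('v, 'a) path" where
  "replace_at p i \<gamma> = (fst p, take i (snd p) @ snd \<gamma> @ drop (Suc i) (snd p))"

text \<open>Coefficient of the basis path \<eta> in p^(a||\<gamma>), the sum of the paths in \<B>
  obtained by replacing each occurrence of a in p by \<gamma>.\<close>
definition repl_coeff ::
  "('v, 'a) quiver \<Rightarrow> ('v, 'a) path set \<Rightarrow> 'a \<Rightarrow> ('v, 'a) path \<Rightarrow> ('v, 'a) path \<Rightarrow> ('v, 'a) path \<Rightarrow> 'k::field" where
  "repl_coeff Q Z a \<gamma> p \<eta> =
     (if \<eta> \<in> basis Q Z
      then of_nat (card {i. i < length (snd p) \<and> snd p ! i = a \<and> replace_at p i \<gamma> = \<eta>})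
      else 0)"

text \<open>Cochains: k(X) is realised as the functions X-type => k vanishing outside X.\<close>
definition supported_on :: "'x set \<Rightarrow> ('x \<Rightarrow> 'k::zero) set" where
  "supported_on X = {f. \<forall>x. x \<notin> X \<longrightarrow> f x = 0}"

definition fscale :: "'k::field \<Rightarrow> ('x \<Rightarrow> 'k) \<Rightarrow> ('x \<Rightarrow> 'k)" where
  "fscale c f = (\<lambda>x. c * f x)"

definition basis_vec :: "'x \<Rightarrow> ('x \<Rightarrow> 'k::{zero,one})" where
  "basis_vec x = (\<lambda>y. if y = x then 1 else 0)"

text \<open>delta^0 : k(Q0||B) -> k(Q1||B),
  e||\<gamma> |-> sum_(a ends at e) a||a\<gamma> - sum_(a starts at e) a||\<gamma>a  (Strametz).\<close>
definition delta0 :: "('v, 'a) quiver \<Rightarrow> ('v, 'a) path set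
     \<Rightarrow> ('v \<times> ('v, 'a) path \<Rightarrow> 'k::field) \<Rightarrow> ('a \<times> ('v, 'a) path \<Rightarrow> 'k)" where
  "delta0 Q Z g = (\<lambda>(a, \<eta>). if (a, \<eta>) \<in> Q1B Q Z then
      (\<Sum>x\<in>Q0B Q Z. g x *
         ((if tgt Q a = fst x \<and> \<eta> = (src Q a, a # snd (snd x)) then 1 else 0)
        - (if src Q a = fst x \<and> \<eta> = (fst (snd x), snd (snd x) @ [a]) then 1 else 0)))
     else 0)"

text \<open>delta^1 : k(Q1||B) -> k(Z||B), a||\<gamma> |-> sum_(r in Z) r||r^(a||\<gamma>).\<close>
definition delta1 :: "('v, 'a) quiver \<Rightarrow> ('v, 'a) path set
     \<Rightarrow> ('a \<times> ('v, 'a) path \<Rightarrow> 'k::field) \<Rightarrow> (('v, 'a) path \<times> ('v, 'a) path \<Rightarrow> 'k)" where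
  "delta1 Q Z f = (\<lambda>(r, \<eta>). if (r, \<eta>) \<in> ZB Q Z then
      (\<Sum>x\<in>Q1B Q Z. f x * repl_coeff Q Z (fst x) (snd x) r \<eta>)
     else 0)"

text \<open>Lie bracket on k(Q1||B): [a||\<gamma>, b||\<delta>] = a||\<gamma>^(b||\<delta>) - b||\<delta>^(a||\<gamma>).\<close>
definition bracket :: "('v, 'a) quiver \<Rightarrow> ('v, 'a) path set
     \<Rightarrow> ('a \<times> ('v, 'a) path \<Rightarrow> 'k::field) \<Rightarrow> ('a \<times> ('v, 'a) path \<Rightarrow> 'k) \<Rightarrow> ('a \<times> ('v, 'a) path \<Rightarrow> 'k)" where
  "bracket Q Z f g = (\<lambda>(c, \<eta>). if (c, \<eta>) \<in> Q1B Q Z then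
      (\<Sum>x\<in>Q1B Q Z. \<Sum>y\<in>Q1B Q Z. f x * g y *
         ((if c = fst x then repl_coeff Q Z (fst y) (snd y) (snd x) \<eta> else 0)
        - (if c = fst y then repl_coeff Q Z (fst x) (snd x) (snd y) \<eta> else 0)))
     else 0)"

definition ker_delta1 :: "('v, 'a) quiver \<Rightarrow> ('v, 'a) path set \<Rightarrow> ('a \<times> ('v, 'a) path \<Rightarrow> 'k::field) set" where
  "ker_delta1 Q Z = {f \<in> supported_on (Q1B Q Z). delta1 Q Z f = (\<lambda>_. 0)}"

definition im_delta0 :: "('v, 'a) quiver \<Rightarrow> ('v, 'a) path set \<Rightarrow> ('a \<times> ('v, 'a) path \<Rightarrow> 'k::field) set" where
  "im_delta0 Q Z = delta0 Q Z ` supported_on (Q0B Q Z)"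

text \<open>dim_k HH^1 = dim_k (Ker delta^1 / Im delta^0) = dim Ker delta^1 - dim Im delta^0
  (Im delta^0 is a subspace of Ker delta^1).\<close>
definition hh1_dim :: "'k::field itself \<Rightarrow> ('v, 'a) quiver \<Rightarrow> ('v, 'a) path set \<Rightarrow> int" where
  "hh1_dim TYPE('k) Q Z =
     int (vector_space.dim (fscale :: 'k \<Rightarrow> _) (ker_delta1 Q Z :: (_ \<Rightarrow> 'k) set))
   - int (vector_space.dim (fscale :: 'k \<Rightarrow> _) (im_delta0 Q Z :: (_ \<Rightarrow> 'k) set))"

text \<open>HH^1(Q1,Z1) and HH^1(Q2,Z2) are isomorphic as Lie algebras: a k-linear map between
  the cocycle spaces inducing a bijective bracket-preserving map of the quotients
  Ker delta^1 / Im delta^0.\<close>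
definition hh1_lie_iso :: "'k::field itself \<Rightarrow> ('v, 'a) quiver \<Rightarrow> ('v, 'a) path set
     \<Rightarrow> ('v, 'a) quiver \<Rightarrow> ('v, 'a) path set \<Rightarrow> bool" where
  "hh1_lie_iso TYPE('k) Q1 Z1 Q2 Z2 \<longleftrightarrow>
    (\<exists>\<phi> :: ('a \<times> ('v, 'a) path \<Rightarrow> 'k) \<Rightarrow> ('a \<times> ('v, 'a) path \<Rightarrow> 'k).
        (\<forall>x\<in>ker_delta1 Q1 Z1. \<phi> x \<in> ker_delta1 Q2 Z2)
      \<and> (\<forall>x\<in>ker_delta1 Q1 Z1. \<forall>y\<in>ker_delta1 Q1 Z1. \<phi> (x + y) = \<phi> x + \<phi> y)
      \<and> (\<forall>c. \<forall>x\<in>ker_delta1 Q1 Z1. \<phi> (fscale c x) = fscale c (\<phi> x))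
      \<and> (\<forall>x\<in>ker_delta1 Q1 Z1. \<phi> x \<in> im_delta0 Q2 Z2 \<longleftrightarrow> x \<in> im_delta0 Q1 Z1)
      \<and> (\<forall>y\<in>ker_delta1 Q2 Z2. \<exists>x\<in>ker_delta1 Q1 Z1. \<phi> x - y \<in> im_delta0 Q2 Z2)
      \<and> (\<forall>x\<in>ker_delta1 Q1 Z1. \<forall>y\<in>ker_delta1 Q1 Z1.
            bracket Q2 Z2 (\<phi> x) (\<phi> y) - \<phi> (bracket Q1 Z1 x y) \<in> im_delta0 Q2 Z2))"

definition rad2_rels :: "('v, 'a) quiver \<Rightarrow> ('v, 'a) path set" where
  "rad2_rels Q = {p. is_path Q p \<and> length (snd p) = 2}"

definition glue_vert :: "'v \<Rightarrow> 'v \<Rightarrow> 'v \<Rightarrow> 'v" where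
  "glue_vert e1 en v = (if v = en then e1 else v)"

text \<open>Q_B: identify e_n with e_1 (the glued vertex f_1 is represented by e_1);
  arrow \<alpha> of Q_A is the arrow \<alpha>* of Q_B.\<close>
definition glue_quiver :: "('v, 'a) quiver \<Rightarrow> 'v \<Rightarrow> 'v \<Rightarrow> ('v, 'a) quiver" where
  "glue_quiver Q e1 en =
     \<lparr> verts = glue_vert e1 en ` verts Q, arrs = arrs Q,
       src = glue_vert e1 en \<circ> src Q, tgt = glue_vert e1 en \<circ> tgt Q \<rparr>"

definition star_path :: "'v \<Rightarrow> 'v \<Rightarrow> ('v, 'a) path \<Rightarrow> ('v, 'a) path" where
  "star_path e1 en p = (glue_vert e1 en (fst p), snd p)"

text \<open>I_B is generated by I_A (i.e. the images p* of the relations of A) and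
  all newly formed length-2 paths through f_1.\<close>
definition glue_rels :: "('v, 'a) quiver \<Rightarrow> 'v \<Rightarrow> 'v \<Rightarrow> ('v, 'a) path set" where
  "glue_rels Q e1 en =
     star_path e1 en ` rad2_rels Q
   \<union> {p. is_path (glue_quiver Q e1 en) p \<and> length (snd p) = 2
         \<and> tgt Q (snd p ! 0) \<noteq> src Q (snd p ! 1)}"

definition conn :: "('v, 'a) quiver \<Rightarrow> 'v rel" where
  "conn Q = ((\<Union>a\<in>arrs Q. {(src Q a, tgt Q a), (tgt Q a, src Q a)})\<^sup>*) \<inter> (verts Q \<times> verts Q)"

definition num_components :: "('v, 'a) quiver \<Rightarrow> nat" where
  "num_components Q = card (verts Q // conn Q)"

definition same_block :: "('v, 'a) quiver \<Rightarrow> 'v \<Rightarrow> 'v \<Rightarrow> bool" where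
  "same_block Q u v \<longleftrightarrow> (u, v) \<in> conn Q"

definition has_loop :: "('v, 'a) quiver \<Rightarrow> 'v \<Rightarrow> bool" where
  "has_loop Q v \<longleftrightarrow> (\<exists>a\<in>arrs Q. src Q a = v \<and> tgt Q a = v)"

text \<open>The block of kQ/rad^2 containing e_v is kQ_C/rad^2 for the component C of v;
  it is isomorphic to k[x]/(x^2) iff Q_C is the quiver with one vertex and one loop.\<close>
definition block_is_dual_numbers :: "('v, 'a) quiver \<Rightarrow> 'v \<Rightarrow> bool" where
  "block_is_dual_numbers Q v \<longleftrightarrow>
     conn Q `` {v} = {v} \<and> card {a \<in> arrs Q. src Q a = v \<or> tgt Q a = v} = 1
     \<and> has_loop Q v"

definition special_pairs :: "('v, 'a) quiver \<Rightarrow> 'v \<Rightarrow> 'v \<Rightarrow> ('a \<times> ('v, 'a) path) set" where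
  "special_pairs Q e1 en =
    {(\<alpha>, p). \<alpha> \<in> arrs Q \<and> p \<in> basis Q (rad2_rels Q)
       \<and> (src Q \<alpha> \<in> {e1, en} \<or> tgt Q \<alpha> \<in> {e1, en})
       \<and> fst (star_path e1 en p) = src (glue_quiver Q e1 en) \<alpha>
       \<and> pend (glue_quiver Q e1 en) (star_path e1 en p) = tgt (glue_quiver Q e1 en) \<alpha>
       \<and> \<not> (fst p = src Q \<alpha> \<and> pend Q p = tgt Q \<alpha>)}"

definition Z_spp :: "'k::field itself \<Rightarrow> ('v, 'a) quiver \<Rightarrow> 'v \<Rightarrow> 'v \<Rightarrow> ('a \<times> ('v, 'a) path \<Rightarrow> 'k) set" where
  "Z_spp TYPE('k) Q e1 en =
     module.span (fscale :: 'k \<Rightarrow> _)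
       ((\<lambda>(\<alpha>, p). basis_vec (\<alpha>, star_path e1 en p)) ` special_pairs Q e1 en)
     \<inter> ker_delta1 (glue_quiver Q e1 en) (glue_rels Q e1 en)"

definition kspp :: "'k::field itself \<Rightarrow> ('v, 'a) quiver \<Rightarrow> 'v \<Rightarrow> 'v \<Rightarrow> nat" where
  "kspp TYPE('k) Q e1 en = vector_space.dim (fscale :: 'k \<Rightarrow> _) (Z_spp TYPE('k) Q e1 en)"

end

theory Submission
  imports Defs
begin

(* For a radical square zero algebra kQ/rad^2 the cocycle space Ker delta^1 has as a basis the
   parallel pairs a||gamma, except the pairs l||e_v for a loop l at v: these are cocycles only
   when 2 = 0 in k and l is the only arrow at v.  The coboundaries Im delta^0 are the image of
   h |-> sum_a (h(t a) - h(s a)) a||a, whose kernel consists of the functions that are constant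
   on connected components, so dim HH^1 = #cocycle pairs - |Q_0| + #components.

   Gluing e_1 and e_n yields again a radical square zero algebra.  Its parallel pairs are the
   images of those of A together with the images alpha*||p* of the special pairs, and a pair of
   both kinds is never a cocycle.  Unless 2 = 0 and e_1 or e_n carries a loop which is the only
   arrow there (excluded by the hypothesis), a pair of A is a cocycle iff its image is one.
   Counting gives the formula, since |Q_0| drops by one and the number of components drops by
   one exactly when e_1 and e_n lie in different blocks.  In that case no special pair is a
   cocycle unless both e_1 and e_n carry loops, so relabelling pairs identifies cocycles,
   coboundaries and brackets of A and B. *)

section \<open>Linear algebra in function spaces\<close>

lemma sum_fun_apply: "(sum g A) x = (\<Sum>a\<in>A. g a x)"
  by (induction A rule: infinite_finite_induct) auto

lemma vector_space_fscale: "vector_space (fscale :: 'k::field \<Rightarrow> ('x \<Rightarrow> 'k) \<Rightarrow> ('x \<Rightarrow> 'k))"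
  by unfold_locales (auto simp: fscale_def algebra_simps fun_eq_iff)

interpretation fs: vector_space "fscale :: 'k::field \<Rightarrow> ('x \<Rightarrow> 'k) \<Rightarrow> ('x \<Rightarrow> 'k)"
  by (rule vector_space_fscale)

lemma fscale_apply [simp]: "fscale c f x = c * f x"
  by (simp add: fscale_def)

lemma module_hom_fscaleI:
  fixes f :: "('x \<Rightarrow> 'k::field) \<Rightarrow> ('y \<Rightarrow> 'k)"
  assumes "\<And>x y. f (x + y) = f x + f y" and "\<And>c x. f (fscale c x) = fscale c (f x)"
  shows "module_hom fscale fscale f"
  using assms vector_space_fscale[where 'k='k and 'x='x] vector_space_fscale[where 'k='k and 'x='y]
  by (simp add: module_hom_def module_hom_axioms_def module_iff_vector_space)

lemma supported_onD: "f \<in> supported_on X \<Longrightarrow> x \<notin> X \<Longrightarrow> f x = 0"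
  by (simp add: supported_on_def)

lemma supported_on_Int: "supported_on X \<inter> supported_on Y = supported_on (X \<inter> Y)"
  unfolding supported_on_def by auto

lemma subspace_supported_on: "fs.subspace (supported_on X :: ('x \<Rightarrow> 'k::field) set)"
  unfolding fs.subspace_def supported_on_def by auto

lemma span_supported_on: "fs.span (supported_on X :: ('x \<Rightarrow> 'k::field) set) = supported_on X"
  by (rule fs.span_eq_iff[THEN iffD2, OF subspace_supported_on])

lemma independent_if_private_coordinates:
  fixes B :: "('x \<Rightarrow> 'k::field) set"
  assumes "finite B"
    and "\<And>b. b \<in> B \<Longrightarrow> \<exists>p. b p \<noteq> 0 \<and> (\<forall>b'\<in>B. b' \<noteq> b \<longrightarrow> b' p = 0)"
  shows "fs.independent B"
proof (rule fs.independent_if_scalars_zero[OF assms(1)])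
  fix c :: "('x \<Rightarrow> 'k) \<Rightarrow> 'k" and b
  assume comb: "(\<Sum>x\<in>B. fscale (c x) x) = 0" and b: "b \<in> B"
  obtain p where p: "b p \<noteq> 0" "\<forall>b'\<in>B. b' \<noteq> b \<longrightarrow> b' p = 0"
    using assms(2)[OF b] by blast
  have "0 = (\<Sum>x\<in>B. c x * x p)"
    using comb by (simp add: sum_fun_apply fun_eq_iff)
  also have "\<dots> = c b * b p"
    by (rule sum.remove[OF assms(1) b, THEN trans]) (simp add: p(2) sum.neutral)
  finally show "c b = 0" using p(1) by simp
qed

lemma span_basis_vec:
  assumes "finite X"
  shows "fs.span (basis_vec ` X) = (supported_on X :: ('x \<Rightarrow> 'k::field) set)"
proof (rule fs.span_subspace)
  show "basis_vec ` X \<subseteq> (supported_on X :: ('x \<Rightarrow> 'k) set)"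
    by (auto simp: supported_on_def basis_vec_def)
  show "(supported_on X :: ('x \<Rightarrow> 'k) set) \<subseteq> fs.span (basis_vec ` X)"
  proof
    fix f :: "'x \<Rightarrow> 'k" assume f: "f \<in> supported_on X"
    have "f = (\<Sum>x\<in>X. fscale (f x) (basis_vec x))"
      using f assms by (auto simp: fun_eq_iff sum_fun_apply basis_vec_def supported_on_def
          if_distrib[of "(*) _"] sum.delta cong: if_cong)
    also have "\<dots> \<in> fs.span (basis_vec ` X)"
      by (intro fs.span_sum fs.span_scale fs.span_base) auto
    finally show "f \<in> fs.span (basis_vec ` X)" .
  qed
qed (rule subspace_supported_on)

lemma independent_basis_vec:
  assumes "finite X"
  shows "fs.independent (basis_vec ` X :: ('x \<Rightarrow> 'k::field) set)"
  using assms by (intro independent_if_private_coordinates) (auto simp: basis_vec_def)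

lemma dim_supported_on:
  assumes "finite X"
  shows "fs.dim (supported_on X :: ('x \<Rightarrow> 'k::field) set) = card X"
proof -
  have "inj (basis_vec :: 'x \<Rightarrow> ('x \<Rightarrow> 'k))"
    unfolding inj_def basis_vec_def fun_eq_iff by (metis one_neq_zero)
  then have "card (basis_vec ` X :: ('x \<Rightarrow> 'k) set) = card X"
    by (simp add: card_image inj_on_subset)
  then show ?thesis
    using fs.dim_eq_card[OF _ independent_basis_vec[OF assms]] span_basis_vec[OF assms]
    by (metis fs.span_span)
qed

lemma independent_span_disjoint_parts:
  fixes B :: "('x \<Rightarrow> 'k::field) set"
  assumes "fs.independent B" "finite B" "K \<subseteq> B" "x \<in> fs.span K" "x \<in> fs.span (B - K)"
  shows "x = 0"
proof -
  obtain u where u: "x = (\<Sum>v\<in>K. fscale (u v) v)"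
    using assms(4) fs.span_finite[OF finite_subset[OF assms(3,2)]] by auto
  obtain w where w: "x = (\<Sum>v\<in>B - K. fscale (w v) v)"
    using assms(5) fs.span_finite[of "B - K"] assms(2) by auto
  define c where "c v = (if v \<in> K then u v else - w v)" for v
  have "(\<Sum>v\<in>B. fscale (c v) v) = (\<Sum>v\<in>K. fscale (c v) v) + (\<Sum>v\<in>B - K. fscale (c v) v)"
    using sum.subset_diff[OF assms(3,2)] by (simp add: add.commute)
  also have "(\<Sum>v\<in>K. fscale (c v) v) = x"
    unfolding u by (intro sum.cong) (auto simp: c_def)
  also have "(\<Sum>v\<in>B - K. fscale (c v) v) = - x"
    unfolding w by (simp add: c_def sum_negf[symmetric] fun_eq_iff sum_fun_apply)
  finally have "(\<Sum>v\<in>B. fscale (c v) v) = 0" by (simp only: add.right_inverse)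
  then have "\<forall>v\<in>B. c v = 0"
    using fs.independentD[OF assms(1,2) subset_refl] by blast
  then have "\<forall>v\<in>K. u v = 0" using assms(3) unfolding c_def by (metis subsetD)
  then show ?thesis unfolding u by (simp add: fun_eq_iff sum_fun_apply)
qed

lemma dim_image_inj_on:
  fixes f :: "('x \<Rightarrow> 'k::field) \<Rightarrow> ('y \<Rightarrow> 'k)"
  assumes hom: "module_hom fscale fscale f" and inj: "inj_on f (fs.span S)"
  shows "fs.dim (f ` S) = fs.dim S"
proof -
  interpret f: module_hom "fscale :: 'k \<Rightarrow> ('x \<Rightarrow> 'k) \<Rightarrow> _" "fscale :: 'k \<Rightarrow> ('y \<Rightarrow> 'k) \<Rightarrow> _" f
    by (rule hom)
  obtain B where B: "B \<subseteq> S" "fs.independent B" "S \<subseteq> fs.span B" "card B = fs.dim S"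
    using fs.basis_exists by blast
  have span_B: "fs.span B = fs.span S"
    using B by (simp add: fs.span_eq fs.span_superset subset_trans)
  then have inj_B: "inj_on f (fs.span B)" using inj by simp
  have "fs.dim (f ` S) = card (f ` B)"
    using fs.dim_eq_card[OF _ f.independent_injective_image[OF B(2) inj_B]]
    by (simp add: f.span_image span_B)
  also have "\<dots> = card B"
    using inj_B by (meson card_image fs.span_superset inj_on_subset)
  finally show ?thesis using B(4) by simp
qed

lemma dim_insert_not_in_span:
  fixes S :: "('x \<Rightarrow> 'k::field) set"
  assumes "S \<subseteq> fs.span X" "finite X" "x \<notin> fs.span S"
  shows "fs.dim (insert x S) = fs.dim S + 1"
proof -
  obtain B where B: "B \<subseteq> S" "fs.independent B" "S \<subseteq> fs.span B" "card B = fs.dim S"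
    using fs.basis_exists by blast
  have "finite B" using fs.independent_span_bound[OF assms(2) B(2)] B(1) assms(1) by auto
  have span_B: "fs.span B = fs.span S"
    using B by (simp add: fs.span_eq fs.span_superset subset_trans)
  then have "x \<notin> fs.span B" using assms(3) by simp
  then have "x \<notin> B" and indep: "fs.independent (insert x B)"
    using fs.span_superset fs.independent_insertI[OF _ B(2)] by auto
  have "fs.span (insert x B) = fs.span (insert x S)"
    using span_B by (metis fs.span_insert)
  then have "fs.dim (insert x S) = card (insert x B)"
    using fs.dim_eq_card[OF _ indep] by simp
  then show ?thesis using \<open>finite B\<close> \<open>x \<notin> B\<close> B(4) by simp
qed

lemma dim_image_eq_card_basis_diff_kernel_basis:
  fixes f :: "('x \<Rightarrow> 'k::field) \<Rightarrow> ('y \<Rightarrow> 'k)"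
  assumes hom: "module_hom fscale fscale f" and S: "fs.subspace S"
    and B: "K \<subseteq> B" "B \<subseteq> S" "fs.independent B" "finite B" "S \<subseteq> fs.span B"
    and K: "K \<subseteq> {x\<in>S. f x = 0}" "{x\<in>S. f x = 0} \<subseteq> fs.span K"
  shows "fs.dim (f ` S) = card (B - K)"
proof -
  interpret f: module_hom "fscale :: 'k \<Rightarrow> ('x \<Rightarrow> 'k) \<Rightarrow> _" "fscale :: 'k \<Rightarrow> ('y \<Rightarrow> 'k) \<Rightarrow> _" f
    by (rule hom)
  have span_diff: "fs.span (B - K) \<subseteq> S"
    using B(2) S by (meson Diff_subset fs.span_minimal order_trans)
  have inj: "inj_on f (fs.span (B - K))"
  proof (subst f.inj_on_iff_eq_0[OF fs.subspace_span], intro ballI impI)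
    fix x assume x: "x \<in> fs.span (B - K)" "f x = 0"
    then have "x \<in> fs.span K" using span_diff K(2) by blast
    then show "x = 0" using independent_span_disjoint_parts[OF B(3,4,1)] x(1) by blast
  qed
  have "f ` S \<subseteq> fs.span (f ` (B - K))"
  proof -
    have "f ` S \<subseteq> f ` fs.span B" using B(5) by (rule image_mono)
    also have "\<dots> = fs.span (f ` B)" by (rule f.span_image[symmetric])
    also have "\<dots> \<subseteq> fs.span (f ` (B - K))"
    proof (intro fs.span_minimal subsetI; clarsimp)
      fix b assume "b \<in> B"
      then show "f b \<in> fs.span (f ` (B - K))"
        using K(1) by (cases "b \<in> K") (auto simp: fs.span_zero intro: fs.span_base)
    qed
    finally show ?thesis .
  qed
  moreover have "f ` (B - K) \<subseteq> fs.span (f ` S)"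
    using B(2) fs.span_superset by blast
  ultimately have "fs.span (f ` (B - K)) = fs.span (f ` S)"
    by (simp only: fs.span_eq)
  moreover have "fs.independent (f ` (B - K))"
    using f.independent_injective_image[OF fs.independent_mono[OF B(3)] inj] by simp
  ultimately have "fs.dim (f ` S) = card (f ` (B - K))"
    by (rule fs.dim_eq_card)
  also have "\<dots> = card (B - K)"
    using inj by (meson card_image fs.span_superset inj_on_subset)
  finally show ?thesis .
qed

lemma dim_image_plus_dim_kernel:
  fixes f :: "('x \<Rightarrow> 'k::field) \<Rightarrow> ('y \<Rightarrow> 'k)"
  assumes hom: "module_hom fscale fscale f" and S: "fs.subspace S"
    and fin: "S \<subseteq> fs.span X" "finite X"
  shows "fs.dim (f ` S) + fs.dim {x\<in>S. f x = 0} = fs.dim S"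
proof -
  obtain K where K: "K \<subseteq> {x\<in>S. f x = 0}" "fs.independent K" "{x\<in>S. f x = 0} \<subseteq> fs.span K"
      "card K = fs.dim {x\<in>S. f x = 0}"
    using fs.basis_exists by blast
  then have "K \<subseteq> S" by blast
  then obtain B where B: "K \<subseteq> B" "B \<subseteq> S" "fs.independent B" "S \<subseteq> fs.span B"
    using fs.maximal_independent_subset_extend[OF _ K(2)] by blast
  have "finite B"
    using fs.independent_span_bound[OF fin(2) B(3)] B(2) fin(1) by auto
  have "fs.dim (f ` S) = card (B - K)"
    by (rule dim_image_eq_card_basis_diff_kernel_basis[OF hom S B(1-3) \<open>finite B\<close> B(4) K(1,3)])
  moreover have "card (B - K) + card K = card B"
    using B(1) \<open>finite B\<close> by (simp add: card_Diff_subset card_mono finite_subset)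
  moreover have "card B = fs.dim S" using fs.basis_card_eq_dim[OF B(2,4,3)] .
  ultimately show ?thesis using K(4) by simp
qed

section \<open>Radical square zero algebras\<close>

definition finite_quiver :: "('v, 'a) quiver \<Rightarrow> bool" where
  "finite_quiver Q \<longleftrightarrow> finite (verts Q) \<and> finite (arrs Q)
     \<and> (\<forall>a\<in>arrs Q. src Q a \<in> verts Q \<and> tgt Q a \<in> verts Q)"

lemma is_path_Nil [simp]: "is_path Q (v, []) \<longleftrightarrow> v \<in> verts Q"
  by (simp add: is_path_def)

lemma is_path_single [simp]: "is_path Q (v, [a]) \<longleftrightarrow> v \<in> verts Q \<and> a \<in> arrs Q \<and> src Q a = v"
  by (auto simp: is_path_def)

lemma is_path_two [simp]:
  "is_path Q (v, [a, b]) \<longleftrightarrow> v \<in> verts Q \<and> a \<in> arrs Q \<and> b \<in> arrs Q \<and> src Q a = v \<and> tgt Q a = src Q b"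
  by (auto simp: is_path_def less_Suc_eq)

lemma pend_simps [simp]:
  "pend Q (v, []) = v" "pend Q (v, [a]) = tgt Q a" "pend Q (v, [a, b]) = tgt Q b"
  by (simp_all add: pend_def)

lemma rad2_rels_iff: "r \<in> rad2_rels Q \<longleftrightarrow> (\<exists>u a b. r = (u, [a, b]) \<and> is_path Q (u, [a, b]))"
  by (cases r) (auto simp: rad2_rels_def length_Suc_conv numeral_2_eq_2 simp del: is_path_two)

lemma basis_rad2: "basis Q (rad2_rels Q) = {p. is_path Q p \<and> length (snd p) \<le> 1}"
proof safe
  fix v xs assume p: "(v, xs) \<in> basis Q (rad2_rels Q)"
  then have path: "is_path Q (v, xs)" by (simp add: basis_def)
  then show "is_path Q (v, xs)" .
  show "length (snd (v, xs)) \<le> 1"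
  proof (rule ccontr)
    assume "\<not> length (snd (v, xs)) \<le> 1"
    then obtain a b rest where xs: "xs = a # b # rest"
      by (cases xs; cases "tl xs") auto
    have "(v, [a, b]) \<in> rad2_rels Q"
      using path unfolding rad2_rels_def xs by (auto simp: is_path_def)
    moreover have "sublist [a, b] xs" unfolding xs by (intro prefix_imp_sublist) simp
    ultimately show False using p by (auto simp: basis_def)
  qed
next
  fix v xs assume "is_path Q (v, xs)" "length (snd (v, xs)) \<le> 1"
  then show "(v, xs) \<in> basis Q (rad2_rels Q)"
    by (auto simp: basis_def rad2_rels_def dest: sublist_length_le)
qed

lemma length2_mem_rad2_rels [simp]: "(u, [p, q]) \<in> rad2_rels Q \<longleftrightarrow> is_path Q (u, [p, q])"
  by (simp add: rad2_rels_def)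

lemma mem_basis_rad2:
  "p \<in> basis Q (rad2_rels Q) \<longleftrightarrow>
     (\<exists>v. p = (v, []) \<and> v \<in> verts Q) \<or> (\<exists>a. p = (src Q a, [a]) \<and> a \<in> arrs Q \<and> src Q a \<in> verts Q)"
  by (cases p; cases "snd p") (auto simp: basis_rad2)

lemma Q1B_rad2_iff:
  assumes "finite_quiver Q"
  shows "(a, \<gamma>) \<in> Q1B Q (rad2_rels Q) \<longleftrightarrow> a \<in> arrs Q \<and>
    ((\<gamma> = (src Q a, []) \<and> tgt Q a = src Q a) \<or>
     (\<exists>b. \<gamma> = (src Q a, [b]) \<and> b \<in> arrs Q \<and> src Q b = src Q a \<and> tgt Q b = tgt Q a))"
  using assms unfolding Q1B_def finite_quiver_def mem_basis_rad2 by auto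

lemma Q0B_rad2_iff:
  "(v, \<gamma>) \<in> Q0B Q (rad2_rels Q) \<longleftrightarrow> v \<in> verts Q \<and>
    (\<gamma> = (v, []) \<or> (\<exists>b. \<gamma> = (v, [b]) \<and> b \<in> arrs Q \<and> src Q b = v \<and> tgt Q b = v))"
  unfolding Q0B_def mem_basis_rad2 by auto

lemma finite_Q1B_rad2:
  assumes "finite_quiver Q"
  shows "finite (Q1B Q (rad2_rels Q))"
proof (rule finite_subset)
  show "Q1B Q (rad2_rels Q) \<subseteq> arrs Q \<times> (verts Q \<times> ({[]} \<union> (\<lambda>b. [b]) ` arrs Q))"
    using assms by (auto simp: Q1B_rad2_iff finite_quiver_def)
qed (use assms in \<open>simp add: finite_quiver_def\<close>)

lemma finite_Q0B_rad2:
  assumes "finite_quiver Q"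
  shows "finite (Q0B Q (rad2_rels Q))"
proof (rule finite_subset)
  show "Q0B Q (rad2_rels Q) \<subseteq> verts Q \<times> (verts Q \<times> ({[]} \<union> (\<lambda>b. [b]) ` arrs Q))"
    by (auto simp: Q0B_rad2_iff)
qed (use assms in \<open>simp add: finite_quiver_def\<close>)

text \<open>For radical square zero, \<open>\<delta>\<^sup>0\<close> kills every \<open>e||c\<close> with \<open>c\<close> a loop (as \<open>ac = ca = 0\<close>),
  and sends \<open>e\<^sub>v||e\<^sub>v\<close> to the signed sum of the \<open>a||a\<close> over the arrows \<open>a\<close> at \<open>v\<close>.\<close>
definition vertex_coboundary :: "('v, 'a) quiver \<Rightarrow> ('v \<Rightarrow> 'k::field) \<Rightarrow> ('a \<times> ('v, 'a) path \<Rightarrow> 'k)" where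
  "vertex_coboundary Q h = (\<lambda>(a, \<eta>).
     if (a, \<eta>) \<in> Q1B Q (rad2_rels Q) \<and> snd \<eta> = [a] then h (tgt Q a) - h (src Q a) else 0)"

lemma vertex_coboundary_cong:
  assumes "finite_quiver Q" and "\<And>v. v \<in> verts Q \<Longrightarrow> h v = h' v"
  shows "vertex_coboundary Q h = vertex_coboundary Q h'"
  using assms unfolding vertex_coboundary_def fun_eq_iff finite_quiver_def
  by (auto simp: Q1B_rad2_iff[OF assms(1)])

lemma module_hom_vertex_coboundary:
  "module_hom fscale fscale (vertex_coboundary Q :: ('v \<Rightarrow> 'k::field) \<Rightarrow> _)"
  by (rule module_hom_fscaleI) (auto simp: vertex_coboundary_def fun_eq_iff algebra_simps)

lemma vertex_coboundary_0 [simp]: "vertex_coboundary Q 0 = 0"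
  by (simp add: vertex_coboundary_def fun_eq_iff split: prod.splits)

lemma delta0_rad2:
  fixes Q :: "('v, 'e) quiver"
  assumes Q: "finite_quiver Q"
  shows "delta0 Q (rad2_rels Q) g = vertex_coboundary Q (\<lambda>v. g (v, (v, [])))"
proof (rule ext, clarify)
  fix a and \<eta> :: "('v, 'e) path"
  let ?Z = "Q0B Q (rad2_rels Q)"
  show "delta0 Q (rad2_rels Q) g (a, \<eta>) = vertex_coboundary Q (\<lambda>v. g (v, (v, []))) (a, \<eta>)"
  proof (cases "(a, \<eta>) \<in> Q1B Q (rad2_rels Q)")
    case False
    then show ?thesis by (simp add: delta0_def vertex_coboundary_def)
  next
    case True
    have ends: "src Q a \<in> verts Q" "tgt Q a \<in> verts Q"
      using True Q by (auto simp: Q1B_rad2_iff finite_quiver_def)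
    let ?t = "(tgt Q a, (tgt Q a, []))" and ?s = "(src Q a, (src Q a, []))"
    have "delta0 Q (rad2_rels Q) g (a, \<eta>) =
        (\<Sum>x\<in>?Z. if x = ?t \<and> snd \<eta> = [a] then g ?t else 0)
      - (\<Sum>x\<in>?Z. if x = ?s \<and> snd \<eta> = [a] then g ?s else 0)"
      using True Q unfolding delta0_def right_diff_distrib sum_subtractf
      by (auto simp: Q1B_rad2_iff Q0B_rad2_iff intro!: arg_cong2[where f = minus] sum.cong)
    also have "\<dots> = (if snd \<eta> = [a] then g ?t - g ?s else 0)"
      using ends finite_Q0B_rad2[OF Q] by (simp add: sum.delta' Q0B_rad2_iff if_distrib cong: if_cong)
    finally show ?thesis using True by (simp add: vertex_coboundary_def)
  qed
qed

lemma im_delta0_rad2: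
  fixes Q :: "('v, 'e) quiver"
  assumes Q: "finite_quiver Q"
  shows "im_delta0 Q (rad2_rels Q)
    = (vertex_coboundary Q ` supported_on (verts Q) :: ('e \<times> ('v, 'e) path \<Rightarrow> 'k::field) set)"
proof (unfold im_delta0_def, intro equalityI subsetI)
  fix y :: "'e \<times> ('v, 'e) path \<Rightarrow> 'k"
  assume "y \<in> delta0 Q (rad2_rels Q) ` supported_on (Q0B Q (rad2_rels Q))"
  then obtain g where y: "y = delta0 Q (rad2_rels Q) g" by blast
  define h where "h v = (if v \<in> verts Q then g (v, (v, [])) else 0)" for v
  have "y = vertex_coboundary Q h"
    unfolding y delta0_rad2[OF Q] by (rule vertex_coboundary_cong[OF Q]) (simp add: h_def)
  moreover have "h \<in> supported_on (verts Q)" by (simp add: supported_on_def h_def)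
  ultimately show "y \<in> vertex_coboundary Q ` supported_on (verts Q)" by blast
next
  fix y :: "'e \<times> ('v, 'e) path \<Rightarrow> 'k"
  assume "y \<in> vertex_coboundary Q ` supported_on (verts Q)"
  then obtain h where y: "y = vertex_coboundary Q h" by blast
  define g where "g x = (if x \<in> Q0B Q (rad2_rels Q) \<and> snd (snd x) = [] then h (fst x) else 0)" for x
  have "y = delta0 Q (rad2_rels Q) g"
    unfolding y delta0_rad2[OF Q] by (rule vertex_coboundary_cong[OF Q]) (simp add: g_def Q0B_rad2_iff)
  moreover have "g \<in> supported_on (Q0B Q (rad2_rels Q))" by (simp add: supported_on_def g_def)
  ultimately show "y \<in> delta0 Q (rad2_rels Q) ` supported_on (Q0B Q (rad2_rels Q))" by blast
qed

definition locally_constant :: "('v, 'a) quiver \<Rightarrow> ('v \<Rightarrow> 'k::field) set" where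
  "locally_constant Q = {h \<in> supported_on (verts Q). \<forall>a\<in>arrs Q. h (src Q a) = h (tgt Q a)}"

lemma subspace_locally_constant: "fs.subspace (locally_constant Q :: ('v \<Rightarrow> 'k::field) set)"
  unfolding fs.subspace_def locally_constant_def supported_on_def by auto

lemma kernel_vertex_coboundary:
  fixes Q :: "('v, 'e) quiver"
  assumes Q: "finite_quiver Q"
  shows "{h \<in> supported_on (verts Q). vertex_coboundary Q h = (0 :: _ \<Rightarrow> 'k::field)} = locally_constant Q"
proof (intro equalityI subsetI)
  fix h :: "'v \<Rightarrow> 'k"
  assume "h \<in> {h \<in> supported_on (verts Q). vertex_coboundary Q h = (0 :: _ \<Rightarrow> 'k)}"
  then have h: "h \<in> supported_on (verts Q)" "vertex_coboundary Q h = (0 :: _ \<Rightarrow> 'k)" by auto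
  have "h (tgt Q a) - h (src Q a) = 0" if "a \<in> arrs Q" for a
    using fun_cong[OF h(2), of "(a, (src Q a, [a]))"] that
    by (simp add: vertex_coboundary_def Q1B_rad2_iff[OF Q])
  then show "h \<in> locally_constant Q" using h(1) by (simp add: locally_constant_def)
qed (auto simp: locally_constant_def vertex_coboundary_def fun_eq_iff Q1B_rad2_iff[OF Q])

lemma dim_im_delta0_rad2:
  fixes Q :: "('v, 'e) quiver"
  assumes Q: "finite_quiver Q"
  shows "fs.dim (im_delta0 Q (rad2_rels Q) :: ('e \<times> ('v, 'e) path \<Rightarrow> 'k::field) set)
       + fs.dim (locally_constant Q :: ('v \<Rightarrow> 'k) set) = card (verts Q)"
proof -
  have fin: "finite (verts Q)" using Q by (simp add: finite_quiver_def)
  have "supported_on (verts Q) \<subseteq> fs.span (basis_vec ` verts Q :: ('v \<Rightarrow> 'k) set)"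
    by (simp add: span_basis_vec[OF fin])
  from dim_image_plus_dim_kernel[OF module_hom_vertex_coboundary[of Q] subspace_supported_on this]
  show ?thesis
    using fin by (simp add: im_delta0_rad2[OF Q] kernel_vertex_coboundary[OF Q] dim_supported_on)
qed

definition undirected_edges :: "('v, 'a) quiver \<Rightarrow> 'v rel" where
  "undirected_edges Q = (\<Union>a\<in>arrs Q. {(src Q a, tgt Q a), (tgt Q a, src Q a)})"

lemma conn_undirected_edges: "conn Q = (undirected_edges Q)\<^sup>* \<inter> (verts Q \<times> verts Q)"
  by (simp add: conn_def undirected_edges_def)

lemma equiv_conn:
  assumes "finite_quiver Q"
  shows "equiv (verts Q) (conn Q)"
proof (rule equivI)
  have "sym (undirected_edges Q)" unfolding undirected_edges_def sym_def by auto
  then show "sym (conn Q)"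
    using sym_rtrancl unfolding conn_undirected_edges sym_def by blast
  show "trans (conn Q)"
    unfolding conn_undirected_edges
  proof (rule transI)
    fix x y z
    assume "(x, y) \<in> (undirected_edges Q)\<^sup>* \<inter> verts Q \<times> verts Q"
      and "(y, z) \<in> (undirected_edges Q)\<^sup>* \<inter> verts Q \<times> verts Q"
    then show "(x, z) \<in> (undirected_edges Q)\<^sup>* \<inter> verts Q \<times> verts Q"
      using rtrancl_trans[of x y _ z] by blast
  qed
qed (auto simp: conn_undirected_edges refl_on_def)

lemma conn_arrow:
  assumes "finite_quiver Q" "a \<in> arrs Q"
  shows "(src Q a, tgt Q a) \<in> conn Q"
  using assms by (auto simp: conn_undirected_edges undirected_edges_def finite_quiver_def)

lemma locally_constant_conn:
  assumes h: "h \<in> locally_constant Q" and "(u, w) \<in> conn Q"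
  shows "h u = h w"
proof -
  have "(u, w) \<in> (undirected_edges Q)\<^sup>*" using assms(2) by (simp add: conn_undirected_edges)
  then show ?thesis
  proof (induction rule: rtrancl_induct)
    case (step y z)
    then show ?case
      using h unfolding undirected_edges_def locally_constant_def by auto
  qed simp
qed

lemma conn_sym: "finite_quiver Q \<Longrightarrow> (x, y) \<in> conn Q \<Longrightarrow> (y, x) \<in> conn Q"
  using equiv_conn by (meson equivE symD)

lemma conn_trans: "finite_quiver Q \<Longrightarrow> (x, y) \<in> conn Q \<Longrightarrow> (y, z) \<in> conn Q \<Longrightarrow> (x, z) \<in> conn Q"
  using equiv_conn by (meson equivE transD)

lemma conn_basis_rad2:
  assumes Q: "finite_quiver Q" and p: "p \<in> basis Q (rad2_rels Q)"
  shows "(fst p, pend Q p) \<in> conn Q"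
proof -
  from p consider v where "p = (v, [])" "v \<in> verts Q" | a where "p = (src Q a, [a])" "a \<in> arrs Q"
    unfolding mem_basis_rad2 by blast
  then show ?thesis
  proof cases
    case 1
    then show ?thesis using equiv_class_self[OF equiv_conn[OF Q] 1(2)] by simp
  next
    case 2
    then show ?thesis using conn_arrow[OF Q] by simp
  qed
qed

lemma block_indicator_locally_constant:
  assumes "finite_quiver Q"
  shows "(\<lambda>v. of_bool ((u, v) \<in> conn Q) :: 'k::field) \<in> locally_constant Q"
proof -
  have "trans (conn Q)" "sym (conn Q)" using equiv_conn[OF assms] by (auto elim: equivE)
  then have "(u, src Q a) \<in> conn Q \<longleftrightarrow> (u, tgt Q a) \<in> conn Q" if "a \<in> arrs Q" for a
    using conn_arrow[OF assms that] by (meson symD transD)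
  moreover have "(u, v) \<in> conn Q \<Longrightarrow> v \<in> verts Q" for v by (simp add: conn_undirected_edges)
  ultimately show ?thesis by (auto simp: locally_constant_def supported_on_def)
qed

text \<open>Locally constant functions are the functions on the set of components.\<close>
definition lift_components :: "('v, 'a) quiver \<Rightarrow> ('v set \<Rightarrow> 'k::field) \<Rightarrow> ('v \<Rightarrow> 'k)" where
  "lift_components Q \<phi> v = (if v \<in> verts Q then \<phi> (conn Q `` {v}) else 0)"

lemma inj_on_lift_components:
  fixes Q :: "('v, 'e) quiver"
  shows "inj_on (lift_components Q) (supported_on (verts Q // conn Q) :: (_ \<Rightarrow> 'k::field) set)"
proof (rule inj_onI, rule ext)
  fix \<phi> \<psi> :: "'v set \<Rightarrow> 'k" and C
  assume \<phi>: "\<phi> \<in> supported_on (verts Q // conn Q)" and \<psi>: "\<psi> \<in> supported_on (verts Q // conn Q)"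
    and eq: "lift_components Q \<phi> = lift_components Q \<psi>"
  show "\<phi> C = \<psi> C"
  proof (cases "C \<in> verts Q // conn Q")
    case True
    then obtain v where "v \<in> verts Q" "C = conn Q `` {v}" by (auto elim: quotientE)
    then show ?thesis using fun_cong[OF eq, of v] by (simp add: lift_components_def)
  qed (use \<phi> \<psi> in \<open>simp add: supported_on_def\<close>)
qed

lemma image_lift_components:
  fixes Q :: "('v, 'e) quiver"
  assumes Q: "finite_quiver Q"
  shows "lift_components Q ` supported_on (verts Q // conn Q) = (locally_constant Q :: (_ \<Rightarrow> 'k::field) set)"
proof (intro equalityI subsetI)
  fix h :: "'v \<Rightarrow> 'k" assume "h \<in> lift_components Q ` supported_on (verts Q // conn Q)"
  moreover have "conn Q `` {src Q a} = conn Q `` {tgt Q a}" if "a \<in> arrs Q" for a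
    using equiv_class_eq[OF equiv_conn[OF Q] conn_arrow[OF Q that]] .
  ultimately show "h \<in> locally_constant Q"
    using Q by (auto simp: locally_constant_def lift_components_def supported_on_def finite_quiver_def)
next
  fix h :: "'v \<Rightarrow> 'k" assume h: "h \<in> locally_constant Q"
  define \<phi> where "\<phi> C = (if C \<in> verts Q // conn Q then the_elem (h ` C) else 0)" for C
  have "h ` conn Q `` {v} = {h v}" if "v \<in> verts Q" for v
    using equiv_class_self[OF equiv_conn[OF Q] that] by (auto dest: locally_constant_conn[OF h])
  then have "lift_components Q \<phi> = h"
    using h by (auto simp: fun_eq_iff lift_components_def \<phi>_def quotientI locally_constant_def
        supported_on_def)
  moreover have "\<phi> \<in> supported_on (verts Q // conn Q)" by (simp add: \<phi>_def supported_on_def)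
  ultimately show "h \<in> lift_components Q ` supported_on (verts Q // conn Q)" by blast
qed

lemma dim_locally_constant:
  assumes Q: "finite_quiver Q"
  shows "fs.dim (locally_constant Q :: ('v \<Rightarrow> 'k::field) set) = num_components Q"
proof -
  have "finite (verts Q // conn Q)"
    using Q finite_quotient[OF _ equiv_type[OF equiv_conn[OF Q]]] by (simp add: finite_quiver_def)
  moreover have "module_hom fscale fscale (lift_components Q :: _ \<Rightarrow> 'v \<Rightarrow> 'k)"
    by (rule module_hom_fscaleI) (auto simp: lift_components_def fun_eq_iff)
  moreover have "inj_on (lift_components Q) (fs.span (supported_on (verts Q // conn Q) :: (_ \<Rightarrow> 'k) set))"
    using inj_on_lift_components by (simp only: span_supported_on)
  ultimately show ?thesis
    using dim_image_inj_on dim_supported_on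
    by (metis image_lift_components[OF Q] num_components_def)
qed

lemma repl_coeff_length2:
  "repl_coeff Q Z b \<gamma> (u, [p, q]) \<eta> =
    (if \<eta> \<in> basis Q Z then
       of_nat ((if p = b \<and> (u, snd \<gamma> @ [q]) = \<eta> then 1 else 0)
             + (if q = b \<and> (u, p # snd \<gamma>) = \<eta> then 1 else 0))
     else 0)"
proof -
  let ?P0 = "p = b \<and> (u, snd \<gamma> @ [q]) = \<eta>" and ?P1 = "q = b \<and> (u, p # snd \<gamma>) = \<eta>"
  have "{i. i < length (snd (u, [p, q])) \<and> snd (u, [p, q]) ! i = b \<and> replace_at (u, [p, q]) i \<gamma> = \<eta>}
      = (if ?P0 then {0} else {}) \<union> (if ?P1 then {1} else {})" (is "?S = _")
  proof (rule set_eqI)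
    fix i :: nat
    show "i \<in> ?S \<longleftrightarrow> i \<in> (if ?P0 then {0} else {}) \<union> (if ?P1 then {1} else {})"
      by (cases "i = 0"; cases "i = 1") (auto simp: replace_at_def)
  qed
  moreover have "card ((if ?P0 then {0} else {}) \<union> (if ?P1 then {1::nat} else {}))
      = (if ?P0 then 1 else 0) + (if ?P1 then 1 else 0)"
    by auto
  ultimately show ?thesis unfolding repl_coeff_def by simp
qed

lemma ker_delta1_coordinate_eq_0:
  fixes f :: "'a \<times> ('v, 'a) path \<Rightarrow> 'k::field"
  assumes fin: "finite (Q1B Q Z)" and f: "f \<in> ker_delta1 Q Z"
    and r: "(r, \<eta>) \<in> ZB Q Z" and y: "y \<in> Q1B Q Z"
    and others: "\<And>x. x \<in> Q1B Q Z \<Longrightarrow> x \<noteq> y \<Longrightarrow> (repl_coeff Q Z (fst x) (snd x) r \<eta> :: 'k) = 0"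
    and coeff: "(repl_coeff Q Z (fst y) (snd y) r \<eta> :: 'k) \<noteq> 0"
  shows "f y = 0"
proof -
  have "0 = delta1 Q Z f (r, \<eta>)" using f by (simp add: ker_delta1_def)
  also have "\<dots> = (\<Sum>x\<in>Q1B Q Z. f x * repl_coeff Q Z (fst x) (snd x) r \<eta>)"
    using r by (simp add: delta1_def)
  also have "\<dots> = f y * repl_coeff Q Z (fst y) (snd y) r \<eta>"
    by (rule sum.remove[OF fin y, THEN trans]) (simp add: others sum.neutral)
  finally show ?thesis using coeff by simp
qed

definition lonely_loop :: "('v, 'a) quiver \<Rightarrow> 'a \<Rightarrow> bool" where
  "lonely_loop Q l \<longleftrightarrow> l \<in> arrs Q \<and> src Q l = tgt Q l
     \<and> (\<forall>c\<in>arrs Q. c \<noteq> l \<longrightarrow> src Q c \<noteq> src Q l \<and> tgt Q c \<noteq> src Q l)"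

text \<open>For a loop \<open>l\<close> at \<open>v\<close>, the pair \<open>l||e\<^sub>v\<close> meets the relation \<open>ll\<close> with coefficient 2 and
  the relations \<open>lc\<close>, \<open>cl\<close> with coefficient 1 for every other arrow \<open>c\<close> at \<open>v\<close>.
  The flag \<open>char2\<close> stands for \<open>2 = 0\<close> in the field.\<close>
definition cocycle_pairs :: "bool \<Rightarrow> ('v, 'a) quiver \<Rightarrow> ('a \<times> ('v, 'a) path) set" where
  "cocycle_pairs char2 Q =
     {(a, \<gamma>) \<in> Q1B Q (rad2_rels Q). snd \<gamma> = [] \<longrightarrow> char2 \<and> lonely_loop Q a}"

lemma cocycle_pairs_subset: "cocycle_pairs char2 Q \<subseteq> Q1B Q (rad2_rels Q)"
  by (auto simp: cocycle_pairs_def)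

lemma finite_cocycle_pairs: "finite_quiver Q \<Longrightarrow> finite (cocycle_pairs char2 Q)"
  using finite_Q1B_rad2 cocycle_pairs_subset finite_subset by metis

lemma ker_delta1_rad2_vanishes:
  fixes Q :: "('v, 'e) quiver" and f :: "'e \<times> ('v, 'e) path \<Rightarrow> 'k::field"
  assumes Q: "finite_quiver Q" and f: "f \<in> ker_delta1 Q (rad2_rels Q)"
    and y: "y \<notin> cocycle_pairs ((2::'k) = 0) Q"
  shows "f y = 0"
proof (cases "y \<in> Q1B Q (rad2_rels Q)")
  case False
  moreover have "f \<in> supported_on (Q1B Q (rad2_rels Q))" using f by (simp add: ker_delta1_def)
  ultimately show ?thesis by (simp add: supported_onD)
next
  case yQ: True
  obtain l \<gamma> where y_pair: "y = (l, \<gamma>)" by (cases y)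
  have "snd \<gamma> = []" and not_lonely: "\<not> ((2::'k) = 0 \<and> lonely_loop Q l)"
    using y yQ by (auto simp: y_pair cocycle_pairs_def)
  then have y_eq: "y = (l, (src Q l, []))" and loop: "src Q l = tgt Q l"
    using yQ by (auto simp: y_pair Q1B_rad2_iff[OF Q])
  have l: "l \<in> arrs Q" "src Q l \<in> verts Q"
    using yQ Q by (auto simp: y_eq Q1B_rad2_iff finite_quiver_def)
  let ?v = "src Q l"
  have only_y: "x = y" if "x \<in> Q1B Q (rad2_rels Q)" "fst x = l" "snd (snd x) = []" for x
    using that by (cases x) (auto simp: y_eq Q1B_rad2_iff[OF Q])
  note coordinate = ker_delta1_coordinate_eq_0[OF finite_Q1B_rad2[OF Q] f _ yQ]
  from not_lonely l loop consider "(2::'k) \<noteq> 0"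
    | c where "c \<in> arrs Q" "c \<noteq> l" "src Q c = ?v"
    | c where "c \<in> arrs Q" "c \<noteq> l" "tgt Q c = ?v"
    unfolding lonely_loop_def by blast
  then show ?thesis
  proof cases
    case 1
    show ?thesis
      by (rule coordinate[of "(?v, [l, l])" "(?v, [l])"])
         (use l loop 1 only_y in \<open>auto simp: ZB_def repl_coeff_length2 basis_rad2 y_eq\<close>)
  next
    case 2
    show ?thesis
      by (rule coordinate[of "(?v, [l, c])" "(?v, [c])"])
         (use l loop 2 only_y in \<open>auto simp: ZB_def repl_coeff_length2 basis_rad2 y_eq\<close>)
  next
    case 3
    have "src Q c \<in> verts Q" using 3 Q by (auto simp: finite_quiver_def)
    show ?thesis
      by (rule coordinate[of "(src Q c, [c, l])" "(src Q c, [c])"])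
         (use \<open>src Q c \<in> verts Q\<close> l loop 3 only_y in \<open>auto simp: ZB_def repl_coeff_length2 basis_rad2 y_eq\<close>)
  qed
qed

lemma repl_coeff_cocycle_pair_rad2:
  fixes Q :: "('v, 'e) quiver"
  assumes Q: "finite_quiver Q" and x: "x \<in> cocycle_pairs ((2::'k::field) = 0) Q"
    and r: "r \<in> rad2_rels Q"
  shows "(repl_coeff Q (rad2_rels Q) (fst x) (snd x) r \<eta> :: 'k) = 0"
proof -
  from rad2_rels_iff[THEN iffD1, OF r] obtain u p q
    where r_eq: "r = (u, [p, q])" and path: "is_path Q (u, [p, q])"
    by blast
  obtain a \<gamma> where x_eq: "x = (a, \<gamma>)" by (cases x)
  show ?thesis
  proof (cases "snd \<gamma> = []")
    case False
    have "(u, snd \<gamma> @ [q]) \<noteq> \<eta> \<and> (u, p # snd \<gamma>) \<noteq> \<eta>" if "\<eta> \<in> basis Q (rad2_rels Q)"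
    proof -
      have "length (snd \<eta>) \<le> 1" using that by (simp add: basis_rad2)
      then show ?thesis using False by (cases "snd \<gamma>") auto
    qed
    then show ?thesis by (simp add: r_eq x_eq repl_coeff_length2)
  next
    case True
    have char2: "(2::'k) = 0" and lonely: "lonely_loop Q a" and in_Q1B: "(a, \<gamma>) \<in> Q1B Q (rad2_rels Q)"
      using x True by (auto simp: x_eq cocycle_pairs_def)
    have \<gamma>: "\<gamma> = (src Q a, [])"
      using in_Q1B True by (auto simp: Q1B_rad2_iff[OF Q])
    have "p \<in> arrs Q" "q \<in> arrs Q" "tgt Q p = src Q q"
      using path by simp_all
    then have "p = a \<longleftrightarrow> q = a"
      using lonely unfolding lonely_loop_def by metis
    then show ?thesis
      using char2 by (cases "p = a") (simp_all add: r_eq x_eq \<gamma> repl_coeff_length2)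
  qed
qed

lemma ker_delta1_rad2:
  fixes Q :: "('v, 'e) quiver"
  assumes Q: "finite_quiver Q"
  shows "ker_delta1 Q (rad2_rels Q)
    = (supported_on (cocycle_pairs ((2::'k::field) = 0) Q) :: ('e \<times> ('v, 'e) path \<Rightarrow> 'k) set)"
proof (intro equalityI subsetI)
  fix f :: "'e \<times> ('v, 'e) path \<Rightarrow> 'k"
  assume "f \<in> ker_delta1 Q (rad2_rels Q)"
  then show "f \<in> supported_on (cocycle_pairs ((2::'k) = 0) Q)"
    using ker_delta1_rad2_vanishes[OF Q] unfolding supported_on_def by blast
next
  fix f :: "'e \<times> ('v, 'e) path \<Rightarrow> 'k"
  assume f: "f \<in> supported_on (cocycle_pairs ((2::'k) = 0) Q)"
  have "f x * repl_coeff Q (rad2_rels Q) (fst x) (snd x) r \<eta> = 0" if "r \<in> rad2_rels Q" for x r \<eta>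
    using supported_onD[OF f, of x] repl_coeff_cocycle_pair_rad2[OF Q _ that, where 'k='k]
    by (cases "x \<in> cocycle_pairs ((2::'k) = 0) Q") auto
  then have "delta1 Q (rad2_rels Q) f (r, \<eta>) = 0" for r \<eta>
    by (simp add: delta1_def ZB_def sum.neutral)
  then have "delta1 Q (rad2_rels Q) f = (\<lambda>_. 0)" by auto
  moreover have "f \<in> supported_on (Q1B Q (rad2_rels Q))"
    using f cocycle_pairs_subset unfolding supported_on_def by blast
  ultimately show "f \<in> ker_delta1 Q (rad2_rels Q)" by (simp add: ker_delta1_def)
qed

theorem hh1_dim_rad2:
  fixes Q :: "('v, 'e) quiver"
  assumes Q: "finite_quiver Q"
  shows "hh1_dim TYPE('k::field) Q (rad2_rels Q)
    = int (card (cocycle_pairs ((2::'k) = 0) Q)) - int (card (verts Q)) + int (num_components Q)"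
proof -
  have "fs.dim (ker_delta1 Q (rad2_rels Q) :: ('e \<times> ('v, 'e) path \<Rightarrow> 'k) set)
      = card (cocycle_pairs ((2::'k) = 0) Q)"
    unfolding ker_delta1_rad2[OF Q] by (rule dim_supported_on[OF finite_cocycle_pairs[OF Q]])
  moreover have "fs.dim (im_delta0 Q (rad2_rels Q) :: ('e \<times> ('v, 'e) path \<Rightarrow> 'k) set)
      + num_components Q = card (verts Q)"
    using dim_im_delta0_rad2[OF Q, where 'k='k] by (simp add: dim_locally_constant[OF Q])
  ultimately show ?thesis unfolding hh1_dim_def by linarith
qed

section \<open>Gluing two vertices\<close>

lemma glue_vert_eq_iff:
  "glue_vert e1 en x = glue_vert e1 en y \<longleftrightarrow> x = y \<or> (x = e1 \<and> y = en) \<or> (x = en \<and> y = e1)"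
  by (auto simp: glue_vert_def)

lemma glue_quiver_simps [simp]:
  "verts (glue_quiver Q e1 en) = glue_vert e1 en ` verts Q"
  "arrs (glue_quiver Q e1 en) = arrs Q"
  "src (glue_quiver Q e1 en) a = glue_vert e1 en (src Q a)"
  "tgt (glue_quiver Q e1 en) a = glue_vert e1 en (tgt Q a)"
  by (simp_all add: glue_quiver_def)

lemma star_path_simps [simp]:
  "fst (star_path e1 en p) = glue_vert e1 en (fst p)" "snd (star_path e1 en p) = snd p"
  by (simp_all add: star_path_def)

lemma pend_star_path: "pend (glue_quiver Q e1 en) (star_path e1 en p) = glue_vert e1 en (pend Q p)"
  by (simp add: pend_def)

lemma is_path_star_path: "is_path Q p \<Longrightarrow> is_path (glue_quiver Q e1 en) (star_path e1 en p)"
  unfolding is_path_def by auto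

lemma star_path_mem_basis_rad2:
  "p \<in> basis Q (rad2_rels Q) \<Longrightarrow>
     star_path e1 en p \<in> basis (glue_quiver Q e1 en) (rad2_rels (glue_quiver Q e1 en))"
  unfolding basis_rad2 using is_path_star_path[of Q p] by simp

lemma lonely_loop_block_is_dual_numbers:
  assumes "lonely_loop Q l" and "src Q l \<in> verts Q"
  shows "conn Q `` {src Q l} = {src Q l}" and "block_is_dual_numbers Q (src Q l)"
proof -
  let ?v = "src Q l"
  have l: "l \<in> arrs Q" "tgt Q l = ?v"
    and only: "\<forall>c\<in>arrs Q. c \<noteq> l \<longrightarrow> src Q c \<noteq> ?v \<and> tgt Q c \<noteq> ?v"
    using assms(1) by (auto simp: lonely_loop_def)
  have "w = ?v" if "(?v, w) \<in> (undirected_edges Q)\<^sup>*" for w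
    using that
  proof (induction rule: rtrancl_induct)
    case (step y z)
    then obtain a where a: "a \<in> arrs Q" "(y, z) = (src Q a, tgt Q a) \<or> (y, z) = (tgt Q a, src Q a)"
      unfolding undirected_edges_def by blast
    have "a = l" using a only step.IH by auto
    then show ?case using a l step.IH by auto
  qed simp
  then show singleton_class: "conn Q `` {?v} = {?v}"
    using assms(2) by (auto simp: conn_undirected_edges)
  have "{a \<in> arrs Q. src Q a = ?v \<or> tgt Q a = ?v} = {l}"
    using l only by auto
  then show "block_is_dual_numbers Q ?v"
    using singleton_class l unfolding block_is_dual_numbers_def has_loop_def by auto
qed

locale vertex_gluing =
  fixes Q :: "('v, 'e) quiver" and e1 en :: 'v
  assumes finite_Q: "finite_quiver Q" and e1_vert: "e1 \<in> verts Q" and en_vert: "en \<in> verts Q"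
    and ends_distinct: "e1 \<noteq> en"
    and e1_not_isolated: "\<exists>a\<in>arrs Q. src Q a = e1 \<or> tgt Q a = e1"
    and en_not_isolated: "\<exists>a\<in>arrs Q. src Q a = en \<or> tgt Q a = en"
begin

abbreviation "\<pi> \<equiv> glue_vert e1 en"
abbreviation "QB \<equiv> glue_quiver Q e1 en"
abbreviation "star \<equiv> star_path e1 en"
abbreviation "pairs_A \<equiv> Q1B Q (rad2_rels Q)"
abbreviation "pairs_B \<equiv> Q1B QB (rad2_rels QB)"
abbreviation "spp \<equiv> special_pairs Q e1 en"

definition star_pair :: "'e \<times> ('v, 'e) path \<Rightarrow> 'e \<times> ('v, 'e) path" where
  "star_pair x = (fst x, star (snd x))"

lemma star_pair_simp [simp]: "star_pair (a, p) = (a, star p)"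
  by (simp add: star_pair_def)

lemma glue_vert_ends [simp]: "\<pi> e1 = e1" "\<pi> en = e1"
  using ends_distinct by (auto simp: glue_vert_def)

lemma glue_vert_eq_self: "v \<noteq> en \<Longrightarrow> \<pi> v = v"
  by (simp add: glue_vert_def)

lemma finite_glued: "finite_quiver QB"
  using finite_Q by (auto simp: finite_quiver_def)

lemma glue_rels_eq_rad2_rels: "glue_rels Q e1 en = rad2_rels QB"
proof (intro equalityI subsetI)
  fix p assume "p \<in> glue_rels Q e1 en"
  then consider r where "r \<in> rad2_rels Q" "p = star r" | "is_path QB p" "length (snd p) = 2"
    unfolding glue_rels_def by blast
  then show "p \<in> rad2_rels QB"
    by cases (auto simp: rad2_rels_def is_path_star_path)
next
  fix p assume "p \<in> rad2_rels QB"
  from rad2_rels_iff[THEN iffD1, OF this] obtain w a b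
    where p: "p = (w, [a, b])" and path: "is_path QB (w, [a, b])"
    by blast
  show "p \<in> glue_rels Q e1 en"
  proof (cases "tgt Q a = src Q b")
    case True
    have "src Q a \<in> verts Q" using finite_Q path by (auto simp: finite_quiver_def)
    then have "(src Q a, [a, b]) \<in> rad2_rels Q" using True path by simp
    moreover have "p = star (src Q a, [a, b])" using p path by (simp add: star_path_def)
    ultimately show ?thesis unfolding glue_rels_def by blast
  next
    case False
    then show ?thesis using p path unfolding glue_rels_def by simp
  qed
qed

lemma card_verts_glued: "card (verts QB) = card (verts Q) - 1"
proof -
  have "\<pi> ` verts Q = verts Q - {en}"
  proof (rule set_eqI)
    fix v show "v \<in> \<pi> ` verts Q \<longleftrightarrow> v \<in> verts Q - {en}"
    proof
      assume "v \<in> \<pi> ` verts Q"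
      then obtain u where "u \<in> verts Q" "v = \<pi> u" by blast
      then show "v \<in> verts Q - {en}" using e1_vert ends_distinct by (auto simp: glue_vert_def)
    next
      assume v: "v \<in> verts Q - {en}"
      then have "\<pi> v = v" using glue_vert_eq_self by simp
      then show "v \<in> \<pi> ` verts Q" using v by (metis DiffD1 image_eqI)
    qed
  qed
  then show ?thesis using en_vert finite_Q by (simp add: finite_quiver_def)
qed

lemma Q1B_glued_iff:
  "(a, \<gamma>) \<in> pairs_B \<longleftrightarrow> a \<in> arrs Q \<and>
    ((\<gamma> = (\<pi> (src Q a), []) \<and> \<pi> (tgt Q a) = \<pi> (src Q a)) \<or>
     (\<exists>b. \<gamma> = (\<pi> (src Q a), [b]) \<and> b \<in> arrs Q \<and> \<pi> (src Q b) = \<pi> (src Q a) \<and> \<pi> (tgt Q b) = \<pi> (tgt Q a)))"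
  using Q1B_rad2_iff[OF finite_glued, of a \<gamma>] by simp

lemma star_pair_mem_pairs_B: "x \<in> pairs_A \<Longrightarrow> star_pair x \<in> pairs_B"
  by (cases x) (auto simp: Q1B_rad2_iff[OF finite_Q] Q1B_glued_iff star_path_def)

lemma inj_on_star_pair: "inj_on star_pair pairs_A"
proof (rule inj_onI)
  fix x y assume x: "x \<in> pairs_A" and y: "y \<in> pairs_A" and eq: "star_pair x = star_pair y"
  obtain a \<gamma> b \<delta> where xy: "x = (a, \<gamma>)" "y = (b, \<delta>)" by (cases x, cases y)
  have "a = b" "star \<gamma> = star \<delta>" using eq by (simp_all add: xy)
  then have "a = b" "snd \<gamma> = snd \<delta>" by (auto dest: arg_cong[where f = snd])
  moreover have "fst \<gamma> = src Q a" "fst \<delta> = src Q b"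
    using x y by (auto simp: xy Q1B_rad2_iff[OF finite_Q])
  ultimately show "x = y" by (simp add: xy prod_eq_iff)
qed

lemma special_pairs_iff:
  "(\<alpha>, p) \<in> spp \<longleftrightarrow> \<alpha> \<in> arrs Q \<and> p \<in> basis Q (rad2_rels Q)
     \<and> (src Q \<alpha> \<in> {e1, en} \<or> tgt Q \<alpha> \<in> {e1, en})
     \<and> \<pi> (fst p) = \<pi> (src Q \<alpha>) \<and> \<pi> (pend Q p) = \<pi> (tgt Q \<alpha>)
     \<and> \<not> (fst p = src Q \<alpha> \<and> pend Q p = tgt Q \<alpha>)"
  unfolding special_pairs_def by (simp add: pend_star_path)

lemma star_pair_special_mem_pairs_B: "x \<in> spp \<Longrightarrow> star_pair x \<in> pairs_B"
proof -
  assume x: "x \<in> spp"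
  obtain \<alpha> p where x_eq: "x = (\<alpha>, p)" by (cases x)
  have "\<alpha> \<in> arrs Q" "p \<in> basis Q (rad2_rels Q)" "\<pi> (fst p) = \<pi> (src Q \<alpha>)" "\<pi> (pend Q p) = \<pi> (tgt Q \<alpha>)"
    using x by (simp_all add: x_eq special_pairs_iff)
  then show "star_pair x \<in> pairs_B"
    unfolding Q1B_def using star_path_mem_basis_rad2 by (simp add: x_eq pend_star_path)
qed

lemma pairs_B_cover: "y \<in> pairs_B \<Longrightarrow> y \<in> star_pair ` pairs_A \<or> y \<in> star_pair ` spp"
proof -
  assume y: "y \<in> pairs_B"
  obtain a \<gamma> where y_eq: "y = (a, \<gamma>)" by (cases y)
  have a: "a \<in> arrs Q" "src Q a \<in> verts Q" "tgt Q a \<in> verts Q"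
    using y finite_Q by (auto simp: y_eq Q1B_glued_iff finite_quiver_def)
  from y consider "\<gamma> = (\<pi> (src Q a), [])" "\<pi> (tgt Q a) = \<pi> (src Q a)"
    | b where "\<gamma> = (\<pi> (src Q a), [b])" "b \<in> arrs Q" "\<pi> (src Q b) = \<pi> (src Q a)" "\<pi> (tgt Q b) = \<pi> (tgt Q a)"
    by (auto simp: y_eq Q1B_glued_iff)
  then show ?thesis
  proof cases
    case 1
    then have "y = star_pair (a, (src Q a, []))" by (simp add: y_eq star_path_def)
    moreover have "(a, (src Q a, [])) \<in> pairs_A \<or> (a, (src Q a, [])) \<in> spp"
      using a 1 glue_vert_eq_iff[of e1 en "tgt Q a" "src Q a"]
      by (auto simp: Q1B_rad2_iff[OF finite_Q] special_pairs_iff basis_rad2)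
    ultimately show ?thesis by blast
  next
    case 2
    have "src Q b \<in> verts Q" using 2(2) finite_Q by (auto simp: finite_quiver_def)
    have "y = star_pair (a, (src Q b, [b]))" using 2 by (simp add: y_eq star_path_def)
    moreover have "(a, (src Q b, [b])) \<in> pairs_A \<or> (a, (src Q b, [b])) \<in> spp"
      using a 2 \<open>src Q b \<in> verts Q\<close> glue_vert_eq_iff[of e1 en "src Q b" "src Q a"]
        glue_vert_eq_iff[of e1 en "tgt Q b" "tgt Q a"]
      by (auto simp: Q1B_rad2_iff[OF finite_Q] special_pairs_iff basis_rad2)
    ultimately show ?thesis by blast
  qed
qed

lemma lonely_loop_glued_iff:
  assumes "src Q l \<notin> {e1, en}"
  shows "lonely_loop QB l \<longleftrightarrow> lonely_loop Q l"
proof -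
  have "\<pi> w = \<pi> (src Q l) \<longleftrightarrow> w = src Q l" "\<pi> (src Q l) = \<pi> w \<longleftrightarrow> src Q l = w" for w
    using assms glue_vert_eq_iff[of e1 en w "src Q l"] by auto
  then show ?thesis by (simp add: lonely_loop_def)
qed

text \<open>The glued vertex also carries the arrows at the other end, which is not isolated.\<close>
lemma not_lonely_loop_glued:
  assumes l: "l \<in> arrs Q" "src Q l = tgt Q l" "src Q l \<in> {e1, en}"
  shows "\<not> lonely_loop QB l"
proof -
  obtain c where c: "c \<in> arrs Q" "c \<noteq> l" "\<pi> (src Q c) = \<pi> (src Q l) \<or> \<pi> (tgt Q c) = \<pi> (src Q l)"
  proof (cases "src Q l = e1")
    case True
    obtain c where "c \<in> arrs Q" "src Q c = en \<or> tgt Q c = en" using en_not_isolated by blast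
    then show ?thesis using that True l(2) ends_distinct by (metis glue_vert_ends)
  next
    case False
    then have "src Q l = en" using l(3) by simp
    obtain c where "c \<in> arrs Q" "src Q c = e1 \<or> tgt Q c = e1" using e1_not_isolated by blast
    then show ?thesis using that \<open>src Q l = en\<close> l(2) ends_distinct by (metis glue_vert_ends)
  qed
  then show ?thesis unfolding lonely_loop_def by auto
qed

text \<open>If \<open>2 = 0\<close> and \<open>l\<close> is a lonely loop at \<open>e\<^sub>1\<close>, then \<open>l||e\<^sub>1\<close> is a cocycle of \<open>A\<close> but not
  of \<open>B\<close>; the hypothesis of the theorem rules this out.\<close>
definition no_lonely_end_loop :: "bool \<Rightarrow> bool" where
  "no_lonely_end_loop char2 \<longleftrightarrow> (char2 \<longrightarrow> (\<forall>l. lonely_loop Q l \<longrightarrow> src Q l \<notin> {e1, en}))"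

lemma cocycle_pairs_glued_iff:
  assumes no_lonely: "no_lonely_end_loop char2" and x: "x \<in> pairs_A"
  shows "star_pair x \<in> cocycle_pairs char2 QB \<longleftrightarrow> x \<in> cocycle_pairs char2 Q"
proof -
  obtain a \<gamma> where x_eq: "x = (a, \<gamma>)" by (cases x)
  have in_A: "(a, \<gamma>) \<in> pairs_A" and in_B: "(a, star \<gamma>) \<in> pairs_B"
    using x star_pair_mem_pairs_B[OF x] by (simp_all add: x_eq)
  show ?thesis
  proof (cases "snd \<gamma> = []")
    case True
    then have loop: "src Q a = tgt Q a" and a: "a \<in> arrs Q"
      using in_A by (auto simp: Q1B_rad2_iff[OF finite_Q])
    show ?thesis
    proof (cases "src Q a \<in> {e1, en}")
      case True
      then show ?thesis
        using no_lonely not_lonely_loop_glued[OF a loop] \<open>snd \<gamma> = []\<close> in_A in_B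
        by (auto simp: x_eq cocycle_pairs_def no_lonely_end_loop_def)
    next
      case False
      then show ?thesis
        using lonely_loop_glued_iff in_A in_B by (simp add: x_eq cocycle_pairs_def)
    qed
  qed (use in_A in_B in \<open>simp add: x_eq cocycle_pairs_def\<close>)
qed

text \<open>A pair of \<open>B\<close> coming from both a pair of \<open>A\<close> and a special pair is \<open>\<alpha>||e\<^sub>1\<close> for a loop
  \<open>\<alpha>\<close> at \<open>e\<^sub>1\<close> or \<open>e\<^sub>n\<close>, which is not a cocycle pair of \<open>B\<close>.\<close>
lemma star_pair_overlap_not_cocycle:
  assumes x: "x \<in> pairs_A" and y: "y \<in> spp" and eq: "star_pair x = star_pair y"
  shows "star_pair x \<notin> cocycle_pairs char2 QB"
proof -
  obtain a \<gamma> p where x_eq: "x = (a, \<gamma>)" and y_eq: "y = (a, p)"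
    using eq by (cases x; cases y) auto
  have same: "snd p = snd \<gamma>" "\<pi> (fst p) = \<pi> (fst \<gamma>)"
    using eq by (auto simp: x_eq y_eq dest: arg_cong[where f = snd] arg_cong[where f = fst])
  have p: "p \<in> basis Q (rad2_rels Q)" and not_parallel: "\<not> (fst p = src Q a \<and> pend Q p = tgt Q a)"
    using y by (simp_all add: y_eq special_pairs_iff)
  have in_A: "(a, \<gamma>) \<in> pairs_A" using x by (simp add: x_eq)
  show ?thesis
  proof (cases "snd \<gamma> = []")
    case False
    then obtain b where "\<gamma> = (src Q a, [b])" "src Q b = src Q a" "tgt Q b = tgt Q a"
      using in_A by (auto simp: Q1B_rad2_iff[OF finite_Q])
    moreover from this have "p = (src Q b, [b])" using p same(1) by (auto simp: mem_basis_rad2)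
    ultimately show ?thesis using not_parallel by simp
  next
    case True
    then have \<gamma>: "\<gamma> = (src Q a, [])" and loop: "src Q a = tgt Q a" and a: "a \<in> arrs Q"
      using in_A by (auto simp: Q1B_rad2_iff[OF finite_Q])
    have "p = (fst p, [])" using same(1) True by (cases p) simp
    then have "fst p \<noteq> src Q a" using not_parallel loop by (metis pend_simps(1))
    moreover have "\<pi> (fst p) = \<pi> (src Q a)" using same(2) \<gamma> by simp
    ultimately have "src Q a \<in> {e1, en}" using glue_vert_eq_iff[of e1 en "fst p" "src Q a"] by auto
    then have "\<not> lonely_loop QB a" by (rule not_lonely_loop_glued[OF a loop])
    then show ?thesis using True by (simp add: x_eq cocycle_pairs_def)
  qed
qed

lemma cocycle_pairs_glued:
  assumes no_lonely: "no_lonely_end_loop char2"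
  shows "cocycle_pairs char2 QB
    = star_pair ` cocycle_pairs char2 Q \<union> (star_pair ` spp \<inter> cocycle_pairs char2 QB)"
proof (intro equalityI subsetI)
  fix y assume y: "y \<in> cocycle_pairs char2 QB"
  then have "y \<in> star_pair ` pairs_A \<or> y \<in> star_pair ` spp"
    using pairs_B_cover cocycle_pairs_subset by blast
  then show "y \<in> star_pair ` cocycle_pairs char2 Q \<union> (star_pair ` spp \<inter> cocycle_pairs char2 QB)"
    using y cocycle_pairs_glued_iff[OF no_lonely] by blast
next
  fix y assume "y \<in> star_pair ` cocycle_pairs char2 Q \<union> (star_pair ` spp \<inter> cocycle_pairs char2 QB)"
  then show "y \<in> cocycle_pairs char2 QB"
    using cocycle_pairs_glued_iff[OF no_lonely] cocycle_pairs_subset by blast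
qed

lemma card_cocycle_pairs_glued:
  assumes no_lonely: "no_lonely_end_loop char2"
  shows "card (cocycle_pairs char2 QB)
    = card (cocycle_pairs char2 Q) + card (star_pair ` spp \<inter> cocycle_pairs char2 QB)"
proof -
  have "star_pair ` cocycle_pairs char2 Q \<inter> (star_pair ` spp \<inter> cocycle_pairs char2 QB) = {}"
    using star_pair_overlap_not_cocycle cocycle_pairs_subset by blast
  moreover have "finite (cocycle_pairs char2 QB)" by (rule finite_cocycle_pairs[OF finite_glued])
  moreover have "card (star_pair ` cocycle_pairs char2 Q) = card (cocycle_pairs char2 Q)"
    by (rule card_image[OF inj_on_subset[OF inj_on_star_pair cocycle_pairs_subset]])
  ultimately show ?thesis
    using cocycle_pairs_glued[OF no_lonely] by (metis card_Un_disjoint finite_Un)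
qed

lemma kspp_eq_card:
  "kspp TYPE('k::field) Q e1 en = card (star_pair ` spp \<inter> cocycle_pairs ((2::'k) = 0) QB)"
proof -
  have "(\<lambda>(\<alpha>, p). (basis_vec (\<alpha>, star p) :: _ \<Rightarrow> 'k)) ` spp = basis_vec ` star_pair ` spp"
    by (force simp: image_iff)
  moreover have fin: "finite (star_pair ` spp)"
    using star_pair_special_mem_pairs_B finite_Q1B_rad2[OF finite_glued] by (meson finite_subset image_subsetI)
  ultimately have "Z_spp TYPE('k) Q e1 en = supported_on (star_pair ` spp \<inter> cocycle_pairs ((2::'k) = 0) QB)"
    unfolding Z_spp_def
    by (simp add: span_basis_vec glue_rels_eq_rad2_rels ker_delta1_rad2[OF finite_glued] supported_on_Int)
  then show ?thesis unfolding kspp_def using fin by (simp add: dim_supported_on)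
qed

theorem hh1_dim_glued:
  assumes "no_lonely_end_loop ((2::'k::field) = 0)"
  shows "hh1_dim TYPE('k) Q (rad2_rels Q)
    = hh1_dim TYPE('k) QB (glue_rels Q e1 en) - 1 - int (kspp TYPE('k) Q e1 en)
      - int (num_components QB) + int (num_components Q)"
proof -
  have "card (verts Q) \<ge> 1"
    using e1_vert finite_Q by (auto simp: finite_quiver_def Suc_le_eq card_gt_0_iff)
  then show ?thesis
    unfolding glue_rels_eq_rad2_rels hh1_dim_rad2[OF finite_Q] hh1_dim_rad2[OF finite_glued]
      card_cocycle_pairs_glued[OF assms] kspp_eq_card card_verts_glued
    by simp
qed

lemma no_lonely_end_loop_if_good:
  assumes "(2::'k::field) \<noteq> 0 \<or> same_block Q e1 en
    \<or> (\<not> same_block Q e1 en \<and> \<not> block_is_dual_numbers Q e1 \<and> \<not> block_is_dual_numbers Q en)"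
  shows "no_lonely_end_loop ((2::'k) = 0)"
  unfolding no_lonely_end_loop_def
proof (intro impI allI notI)
  fix l assume char2: "(2::'k) = 0" and lonely: "lonely_loop Q l" and end_loop: "src Q l \<in> {e1, en}"
  then have "src Q l \<in> verts Q" using e1_vert en_vert by auto
  note lonely_block = lonely_loop_block_is_dual_numbers[OF lonely this]
  have "\<not> same_block Q e1 en"
  proof
    assume "same_block Q e1 en"
    then have "(e1, en) \<in> conn Q" by (simp add: same_block_def)
    moreover from this have "(en, e1) \<in> conn Q" using equiv_conn[OF finite_Q] by (meson equivE symD)
    ultimately have "e1 \<in> conn Q `` {en}" "en \<in> conn Q `` {e1}" by auto
    then show False using lonely_block(1) end_loop ends_distinct by (metis empty_iff insertE)
  qed
  moreover have "block_is_dual_numbers Q e1 \<or> block_is_dual_numbers Q en"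
    using lonely_block(2) end_loop by auto
  ultimately show False using assms char2 by auto
qed

definition locally_constant_ends_equal :: "('v \<Rightarrow> 'k::field) set" where
  "locally_constant_ends_equal = {h \<in> locally_constant Q. h e1 = h en}"

definition pullback :: "('v \<Rightarrow> 'k::field) \<Rightarrow> ('v \<Rightarrow> 'k)" where
  "pullback h v = (if v \<in> verts Q then h (\<pi> v) else 0)"

lemma inj_on_pullback: "inj_on pullback (locally_constant QB :: ('v \<Rightarrow> 'k::field) set)"
proof (rule inj_onI, rule ext)
  fix h h' :: "'v \<Rightarrow> 'k" and w
  assume h: "h \<in> locally_constant QB" and h': "h' \<in> locally_constant QB" and eq: "pullback h = pullback h'"
  show "h w = h' w"
  proof (cases "w \<in> verts QB")
    case True
    then obtain v where "v \<in> verts Q" "w = \<pi> v" by auto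
    then show ?thesis using fun_cong[OF eq, of v] by (simp add: pullback_def)
  qed (use h h' in \<open>simp add: locally_constant_def supported_on_def\<close>)
qed

lemma image_pullback:
  "pullback ` locally_constant QB = (locally_constant_ends_equal :: ('v \<Rightarrow> 'k::field) set)"
proof (intro equalityI subsetI)
  fix h' :: "'v \<Rightarrow> 'k" assume "h' \<in> pullback ` locally_constant QB"
  then obtain h where h: "h \<in> locally_constant QB" and h': "h' = pullback h" by blast
  have "h (\<pi> (src Q a)) = h (\<pi> (tgt Q a))" if "a \<in> arrs Q" for a
    using h that by (simp add: locally_constant_def)
  then show "h' \<in> locally_constant_ends_equal"
    using finite_Q e1_vert en_vert
    by (auto simp: h' pullback_def locally_constant_ends_equal_def locally_constant_def
        supported_on_def finite_quiver_def)
next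
  fix h :: "'v \<Rightarrow> 'k" assume h: "h \<in> locally_constant_ends_equal"
  define h\<^sub>B where "h\<^sub>B w = (if w \<in> verts QB then h w else 0)" for w
  have h_glue: "h (\<pi> v) = h v" for v
    using h by (cases "v = en") (auto simp: locally_constant_ends_equal_def glue_vert_eq_self)
  have "pullback h\<^sub>B = h"
    using h by (auto simp: fun_eq_iff pullback_def h\<^sub>B_def h_glue locally_constant_ends_equal_def
        locally_constant_def supported_on_def)
  moreover have "h\<^sub>B \<in> locally_constant QB"
    using h finite_Q
    by (auto simp: h\<^sub>B_def h_glue locally_constant_ends_equal_def locally_constant_def
        supported_on_def finite_quiver_def)
  ultimately show "h \<in> pullback ` locally_constant QB" by blast
qed

lemma dim_locally_constant_glued:
  "fs.dim (locally_constant QB :: ('v \<Rightarrow> 'k::field) set) = fs.dim (locally_constant_ends_equal :: ('v \<Rightarrow> 'k) set)"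
proof -
  have "module_hom fscale fscale (pullback :: ('v \<Rightarrow> 'k) \<Rightarrow> _)"
    by (rule module_hom_fscaleI) (auto simp: pullback_def fun_eq_iff)
  moreover have "fs.span (locally_constant QB :: ('v \<Rightarrow> 'k) set) = locally_constant QB"
    by (simp add: subspace_locally_constant)
  ultimately show ?thesis
    using dim_image_inj_on inj_on_pullback image_pullback by metis
qed

lemma locally_constant_ends_equal_same_block:
  "same_block Q e1 en \<Longrightarrow> (locally_constant_ends_equal :: ('v \<Rightarrow> 'k::field) set) = locally_constant Q"
  unfolding locally_constant_ends_equal_def same_block_def
  using locally_constant_conn[of _ Q e1 en] by auto

lemma dim_locally_constant_different_blocks:
  assumes "\<not> same_block Q e1 en"
  shows "fs.dim (locally_constant Q :: ('v \<Rightarrow> 'k::field) set)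
    = fs.dim (locally_constant_ends_equal :: ('v \<Rightarrow> 'k) set) + 1"
proof -
  let ?i = "\<lambda>v. of_bool ((e1, v) \<in> conn Q) :: 'k"
  have i_ends: "?i e1 = 1" "?i en = 0"
    using equiv_class_self[OF equiv_conn[OF finite_Q] e1_vert] assms
    by (simp_all add: same_block_def)
  have i: "?i \<in> locally_constant Q" by (rule block_indicator_locally_constant[OF finite_Q])
  have subspace: "fs.subspace (locally_constant_ends_equal :: ('v \<Rightarrow> 'k) set)"
    using subspace_locally_constant
    unfolding locally_constant_ends_equal_def fs.subspace_def by auto
  have "?i \<notin> fs.span locally_constant_ends_equal"
    unfolding fs.span_eq_iff[THEN iffD2, OF subspace]
    using i_ends by (simp add: locally_constant_ends_equal_def)
  moreover have "fs.span (insert ?i locally_constant_ends_equal) = locally_constant Q"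
  proof (rule fs.span_subspace)
    show "insert ?i locally_constant_ends_equal \<subseteq> locally_constant Q"
      using i by (auto simp: locally_constant_ends_equal_def)
    show "locally_constant Q \<subseteq> fs.span (insert ?i locally_constant_ends_equal)"
    proof
      fix h :: "'v \<Rightarrow> 'k" assume h: "h \<in> locally_constant Q"
      let ?h' = "h - fscale (h e1 - h en) ?i"
      have "?h' \<in> locally_constant_ends_equal"
        using i_ends fs.subspace_diff[OF subspace_locally_constant h fs.subspace_scale[OF subspace_locally_constant i]]
        by (simp add: locally_constant_ends_equal_def)
      then have "?h' + fscale (h e1 - h en) ?i \<in> fs.span (insert ?i locally_constant_ends_equal)"
        by (intro fs.span_add fs.span_scale fs.span_base) auto
      then show "h \<in> fs.span (insert ?i locally_constant_ends_equal)" by simp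
    qed
  qed (rule subspace_locally_constant)
  moreover have "locally_constant_ends_equal \<subseteq> fs.span (basis_vec ` verts Q :: ('v \<Rightarrow> 'k) set)"
    using finite_Q by (auto simp: span_basis_vec finite_quiver_def locally_constant_ends_equal_def locally_constant_def)
  ultimately show ?thesis
    using dim_insert_not_in_span[of _ "basis_vec ` verts Q"] finite_Q
    by (metis fs.dim_span finite_imageI finite_quiver_def)
qed

text \<open>Component counts do not depend on the field; any field, here \<open>real\<close>, computes them as
  dimensions.\<close>
lemma num_components_glued_same_block:
  "same_block Q e1 en \<Longrightarrow> num_components QB = num_components Q"
  using dim_locally_constant[OF finite_glued, where 'k = real] dim_locally_constant[OF finite_Q, where 'k = real]
    dim_locally_constant_glued[where 'k = real] locally_constant_ends_equal_same_block[where 'k = real]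
  by simp

lemma num_components_glued_different_blocks:
  "\<not> same_block Q e1 en \<Longrightarrow> num_components Q = num_components QB + 1"
  using dim_locally_constant[OF finite_glued, where 'k = real] dim_locally_constant[OF finite_Q, where 'k = real]
    dim_locally_constant_glued[where 'k = real] dim_locally_constant_different_blocks[where 'k = real]
  by simp

end

section \<open>The Lie algebra isomorphism for different blocks\<close>

definition bracket_coeff ::
  "('v, 'a) quiver \<Rightarrow> ('v, 'a) path set \<Rightarrow> 'a \<Rightarrow> ('v, 'a) path
     \<Rightarrow> 'a \<times> ('v, 'a) path \<Rightarrow> 'a \<times> ('v, 'a) path \<Rightarrow> 'k::field" where
  "bracket_coeff Q Z c \<eta> x y =
     (if c = fst x then repl_coeff Q Z (fst y) (snd y) (snd x) \<eta> else 0)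
   - (if c = fst y then repl_coeff Q Z (fst x) (snd x) (snd y) \<eta> else 0)"

lemma bracket_eq:
  "bracket Q Z f g (c, \<eta>) = (if (c, \<eta>) \<in> Q1B Q Z
     then \<Sum>x\<in>Q1B Q Z. \<Sum>y\<in>Q1B Q Z. f x * g y * bracket_coeff Q Z c \<eta> x y else 0)"
  by (simp add: bracket_def bracket_coeff_def)

context vertex_gluing
begin

lemma ends_not_conn:
  assumes "\<not> same_block Q e1 en" "x \<in> {e1, en}" "y \<in> {e1, en}" "(x, y) \<in> conn Q"
  shows "x = y"
  using assms conn_sym[OF finite_Q] unfolding same_block_def by auto

lemma special_pair_different_blocks:
  assumes different: "\<not> same_block Q e1 en" and sp: "(\<alpha>, p) \<in> spp"
  shows "fst p \<noteq> src Q \<alpha>" "fst p \<in> {e1, en}" "src Q \<alpha> \<in> {e1, en}"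
    and "src Q \<alpha> = tgt Q \<alpha>" "fst p = pend Q p"
proof -
  have \<alpha>: "\<alpha> \<in> arrs Q" and p: "p \<in> basis Q (rad2_rels Q)"
    and src_glued: "\<pi> (fst p) = \<pi> (src Q \<alpha>)" and tgt_glued: "\<pi> (pend Q p) = \<pi> (tgt Q \<alpha>)"
    and not_parallel: "\<not> (fst p = src Q \<alpha> \<and> pend Q p = tgt Q \<alpha>)"
    using sp by (simp_all add: special_pairs_iff)
  have conn_\<alpha>: "(src Q \<alpha>, tgt Q \<alpha>) \<in> conn Q" by (rule conn_arrow[OF finite_Q \<alpha>])
  have conn_p: "(fst p, pend Q p) \<in> conn Q" by (rule conn_basis_rad2[OF finite_Q p])
  have glued: "x = y \<or> (x \<in> {e1, en} \<and> y \<in> {e1, en})" if "\<pi> x = \<pi> y" for x y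
    using that glue_vert_eq_iff[of e1 en x y] by auto
  show src_ne: "fst p \<noteq> src Q \<alpha>"
  proof
    assume "fst p = src Q \<alpha>"
    then have "pend Q p \<noteq> tgt Q \<alpha>" using not_parallel by blast
    moreover have "(pend Q p, tgt Q \<alpha>) \<in> conn Q"
      using conn_trans[OF finite_Q conn_sym[OF finite_Q conn_p], of "tgt Q \<alpha>"] conn_\<alpha> \<open>fst p = src Q \<alpha>\<close>
      by simp
    ultimately show False using glued[OF tgt_glued] ends_not_conn[OF different] by blast
  qed
  then show src_ends: "fst p \<in> {e1, en}" "src Q \<alpha> \<in> {e1, en}" using glued[OF src_glued] by auto
  have "pend Q p \<noteq> tgt Q \<alpha>"
  proof
    assume "pend Q p = tgt Q \<alpha>"
    then have "(fst p, src Q \<alpha>) \<in> conn Q"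
      using conn_trans[OF finite_Q conn_p, of "src Q \<alpha>"] conn_sym[OF finite_Q conn_\<alpha>] by simp
    then show False using src_ne ends_not_conn[OF different src_ends] by blast
  qed
  then have tgt_ends: "pend Q p \<in> {e1, en}" "tgt Q \<alpha> \<in> {e1, en}" using glued[OF tgt_glued] by auto
  show "src Q \<alpha> = tgt Q \<alpha>" by (rule ends_not_conn[OF different src_ends(2) tgt_ends(2) conn_\<alpha>])
  show "fst p = pend Q p" by (rule ends_not_conn[OF different src_ends(1) tgt_ends(1) conn_p])
qed

lemma special_pairs_not_cocycle:
  assumes different: "\<not> same_block Q e1 en" and no_loops: "\<not> (has_loop Q e1 \<and> has_loop Q en)"
  shows "star_pair ` spp \<inter> cocycle_pairs char2 QB = {}"
proof (rule ccontr)
  assume "star_pair ` spp \<inter> cocycle_pairs char2 QB \<noteq> {}"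
  then obtain \<alpha> p where sp: "(\<alpha>, p) \<in> spp" and cocycle: "(\<alpha>, star p) \<in> cocycle_pairs char2 QB"
    by force
  have \<alpha>: "\<alpha> \<in> arrs Q" and p: "p \<in> basis Q (rad2_rels Q)"
    using sp by (simp_all add: special_pairs_iff)
  note ends = special_pair_different_blocks[OF different sp]
  show False
  proof (cases "snd p = []")
    case True
    then show False
      using cocycle not_lonely_loop_glued[OF \<alpha> ends(4,3)] by (simp add: cocycle_pairs_def)
  next
    case False
    then obtain b where "p = (src Q b, [b])" "b \<in> arrs Q"
      using p unfolding mem_basis_rad2 by auto
    then have "has_loop Q (fst p)" using ends(5) unfolding has_loop_def by auto
    moreover have "has_loop Q (src Q \<alpha>)" using \<alpha> ends(4) unfolding has_loop_def by auto
    ultimately show False using no_loops ends(1-3) by auto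
  qed
qed

lemma cocycle_pairs_glued_different_blocks:
  assumes "no_lonely_end_loop char2" "\<not> same_block Q e1 en" "\<not> (has_loop Q e1 \<and> has_loop Q en)"
  shows "cocycle_pairs char2 QB = star_pair ` cocycle_pairs char2 Q"
  using cocycle_pairs_glued[OF assms(1)] special_pairs_not_cocycle[OF assms(2,3)] by blast

definition transport :: "('e \<times> ('v, 'e) path \<Rightarrow> 'k) \<Rightarrow> ('e \<times> ('v, 'e) path \<Rightarrow> 'k::field)" where
  "transport f y = (if y \<in> star_pair ` pairs_A then f (the_inv_into pairs_A star_pair y) else 0)"

lemma transport_star_pair: "x \<in> pairs_A \<Longrightarrow> transport f (star_pair x) = f x"
  unfolding transport_def using the_inv_into_f_f[OF inj_on_star_pair] by auto

lemma transport_outside: "y \<notin> star_pair ` pairs_A \<Longrightarrow> transport f y = 0"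
  unfolding transport_def by simp

lemma transport_add: "transport (f + g) = transport f + transport g"
  by (rule ext) (simp add: transport_def)

lemma transport_scale: "transport (fscale c f) = fscale c (transport f)"
  by (rule ext) (simp add: transport_def)

lemma transport_inj:
  assumes "f \<in> supported_on pairs_A" "g \<in> supported_on pairs_A" "transport f = transport g"
  shows "f = g"
proof
  fix x show "f x = g x"
  proof (cases "x \<in> pairs_A")
    case True
    then show ?thesis using assms(3) transport_star_pair[OF True] by metis
  qed (use assms(1,2) in \<open>simp add: supported_onD\<close>)
qed

lemma vertex_coboundary_supported: "vertex_coboundary Q h \<in> supported_on pairs_A"
  unfolding supported_on_def vertex_coboundary_def by auto

lemma transport_vertex_coboundary:
  "transport (vertex_coboundary Q (\<lambda>v. h (\<pi> v))) = (vertex_coboundary QB h :: _ \<Rightarrow> 'k::field)"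
proof
  fix y :: "'e \<times> ('v, 'e) path"
  show "transport (vertex_coboundary Q (\<lambda>v. h (\<pi> v))) y = vertex_coboundary QB h y"
  proof (cases "y \<in> star_pair ` pairs_A")
    case True
    then obtain a p where x: "(a, p) \<in> pairs_A" and y: "y = star_pair (a, p)" by auto
    have "(a, star p) \<in> pairs_B" using star_pair_mem_pairs_B[OF x] by simp
    moreover have "transport (vertex_coboundary Q (\<lambda>v. h (\<pi> v))) y = vertex_coboundary Q (\<lambda>v. h (\<pi> v)) (a, p)"
      unfolding y by (rule transport_star_pair[OF x])
    ultimately show ?thesis
      using x by (simp add: y vertex_coboundary_def)
  next
    case False
    obtain a q where y: "y = (a, q)" by (cases y)
    have "\<not> ((a, q) \<in> pairs_B \<and> snd q = [a])"
    proof
      assume "(a, q) \<in> pairs_B \<and> snd q = [a]"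
      then have "a \<in> arrs Q" and "q = (\<pi> (src Q a), [a])" by (auto simp: Q1B_glued_iff)
      then have "(a, (src Q a, [a])) \<in> pairs_A" "star_pair (a, (src Q a, [a])) = y"
        by (simp_all add: y Q1B_rad2_iff[OF finite_Q] star_path_def)
      then show False using False by blast
    qed
    then show ?thesis using False by (auto simp: transport_outside vertex_coboundary_def y)
  qed
qed

lemma repl_coeff_star_path:
  assumes "fst p = fst \<eta>" "\<eta> \<in> basis Q (rad2_rels Q)"
  shows "(repl_coeff QB (rad2_rels QB) b (star \<gamma>) (star p) (star \<eta>) :: 'k::field)
    = repl_coeff Q (rad2_rels Q) b \<gamma> p \<eta>"
proof -
  have "{i. i < length (snd (star p)) \<and> snd (star p) ! i = b \<and> replace_at (star p) i (star \<gamma>) = star \<eta>}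
      = {i. i < length (snd p) \<and> snd p ! i = b \<and> replace_at p i \<gamma> = \<eta>}"
    using assms(1) by (auto simp: replace_at_def star_path_def prod_eq_iff)
  then show ?thesis
    unfolding repl_coeff_def using star_path_mem_basis_rad2[OF assms(2)] assms(2) by simp
qed

lemma repl_coeff_glued_nonzero:
  assumes cp: "(c, p) \<in> pairs_A" and b\<gamma>: "(b, \<gamma>) \<in> pairs_A"
    and nonzero: "(repl_coeff QB (rad2_rels QB) b (star \<gamma>) (star p) \<eta> :: 'k::field) \<noteq> 0"
  shows "(c, \<eta>) \<in> star_pair ` pairs_A"
proof -
  let ?S = "{i. i < length (snd (star p)) \<and> snd (star p) ! i = b \<and> replace_at (star p) i (star \<gamma>) = \<eta>}"
  have "?S \<noteq> {}"
  proof
    assume "?S = {}"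
    then have "card ?S = 0" by (simp only: card.empty)
    then have "(repl_coeff QB (rad2_rels QB) b (star \<gamma>) (star p) \<eta> :: 'k) = 0"
      unfolding repl_coeff_def by (simp only: of_nat_0 if_cancel)
    then show False using nonzero by simp
  qed
  then obtain i where "i \<in> ?S" by blast
  then have i: "i < length (snd p)" "snd p ! i = b" "replace_at (star p) i (star \<gamma>) = \<eta>" by simp_all
  then obtain b' where p: "p = (src Q c, [b'])" "src Q b' = src Q c" "tgt Q b' = tgt Q c"
    using cp by (auto simp: Q1B_rad2_iff[OF finite_Q])
  then have "i = 0" "b' = b" using i by auto
  then have "(c, (src Q c, snd \<gamma>)) \<in> pairs_A" "star_pair (c, (src Q c, snd \<gamma>)) = (c, \<eta>)"
    using cp b\<gamma> p i(3) by (auto simp: Q1B_rad2_iff[OF finite_Q] replace_at_def star_path_def)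
  then show ?thesis by (metis image_eqI)
qed

lemma sum_pairs_B_eq_sum_pairs_A:
  assumes "\<And>u v. u \<notin> star_pair ` pairs_A \<or> v \<notin> star_pair ` pairs_A \<Longrightarrow> T u v = (0::'k::field)"
  shows "(\<Sum>u\<in>pairs_B. \<Sum>v\<in>pairs_B. T u v) = (\<Sum>u\<in>pairs_A. \<Sum>v\<in>pairs_A. T (star_pair u) (star_pair v))"
proof -
  have sub: "star_pair ` pairs_A \<subseteq> pairs_B" using star_pair_mem_pairs_B by blast
  have fin: "finite pairs_B" by (rule finite_Q1B_rad2[OF finite_glued])
  have restrict: "(\<Sum>v\<in>pairs_B. S v) = (\<Sum>v\<in>pairs_A. S (star_pair v))"
    if S: "\<And>v. v \<in> pairs_B - star_pair ` pairs_A \<Longrightarrow> S v = 0" for S :: "_ \<Rightarrow> 'k"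
  proof -
    have "(\<Sum>v\<in>pairs_B. S v) = (\<Sum>v\<in>star_pair ` pairs_A. S v)"
      using S by (intro sum.mono_neutral_right[OF fin sub]) blast
    also have "\<dots> = (\<Sum>v\<in>pairs_A. S (star_pair v))"
      by (simp add: sum.reindex[OF inj_on_star_pair])
    finally show ?thesis .
  qed
  have "(\<Sum>u\<in>pairs_B. \<Sum>v\<in>pairs_B. T u v) = (\<Sum>u\<in>pairs_A. \<Sum>v\<in>pairs_B. T (star_pair u) v)"
    using assms by (intro restrict sum.neutral) blast
  also have "\<dots> = (\<Sum>u\<in>pairs_A. \<Sum>v\<in>pairs_A. T (star_pair u) (star_pair v))"
    using assms by (intro sum.cong refl restrict) blast
  finally show ?thesis .
qed

lemma fst_snd_mem_pairs_A: "x \<in> pairs_A \<Longrightarrow> fst (snd x) = src Q (fst x)"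
  by (cases x) (auto simp: Q1B_rad2_iff[OF finite_Q])

lemma bracket_coeff_star_pair:
  assumes z: "(c, \<eta>) \<in> pairs_A" and uv: "u \<in> pairs_A" "v \<in> pairs_A"
  shows "(bracket_coeff QB (rad2_rels QB) c (star \<eta>) (star_pair u) (star_pair v) :: 'k::field)
    = bracket_coeff Q (rad2_rels Q) c \<eta> u v"
proof -
  have \<eta>: "\<eta> \<in> basis Q (rad2_rels Q)" "fst \<eta> = src Q c"
    using z fst_snd_mem_pairs_A[OF z] by (simp_all add: Q1B_def)
  have "c = fst u \<Longrightarrow> (repl_coeff QB (rad2_rels QB) (fst v) (star (snd v)) (star (snd u)) (star \<eta>) :: 'k)
      = repl_coeff Q (rad2_rels Q) (fst v) (snd v) (snd u) \<eta>"
    and "c = fst v \<Longrightarrow> (repl_coeff QB (rad2_rels QB) (fst u) (star (snd u)) (star (snd v)) (star \<eta>) :: 'k)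
      = repl_coeff Q (rad2_rels Q) (fst u) (snd u) (snd v) \<eta>"
    using repl_coeff_star_path[OF _ \<eta>(1)] \<eta>(2) fst_snd_mem_pairs_A[OF uv(1)] fst_snd_mem_pairs_A[OF uv(2)]
    by simp_all
  then show ?thesis by (simp add: bracket_coeff_def star_pair_def)
qed

lemma bracket_coeff_glued_outside:
  assumes "(c, \<eta>) \<notin> star_pair ` pairs_A" and uv: "u \<in> pairs_A" "v \<in> pairs_A"
  shows "(bracket_coeff QB (rad2_rels QB) c \<eta> (star_pair u) (star_pair v) :: 'k::field) = 0"
proof -
  have "c = fst u \<Longrightarrow> (repl_coeff QB (rad2_rels QB) (fst v) (star (snd v)) (star (snd u)) \<eta> :: 'k) = 0"
    and "c = fst v \<Longrightarrow> (repl_coeff QB (rad2_rels QB) (fst u) (star (snd u)) (star (snd v)) \<eta> :: 'k) = 0"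
    using repl_coeff_glued_nonzero[of c "snd u" "fst v" "snd v" \<eta>]
      repl_coeff_glued_nonzero[of c "snd v" "fst u" "snd u" \<eta>] assms by auto
  then show ?thesis by (simp add: bracket_coeff_def star_pair_def)
qed

lemma bracket_transport:
  fixes f g :: "'e \<times> ('v, 'e) path \<Rightarrow> 'k::field"
  shows "bracket QB (rad2_rels QB) (transport f) (transport g) = transport (bracket Q (rad2_rels Q) f g)"
proof
  fix z :: "'e \<times> ('v, 'e) path"
  obtain c \<eta> where z: "z = (c, \<eta>)" by (cases z)
  let ?T = "\<lambda>x y. transport f x * transport g y * bracket_coeff QB (rad2_rels QB) c \<eta> x y"
  have "?T x y = 0" if "x \<notin> star_pair ` pairs_A \<or> y \<notin> star_pair ` pairs_A" for x y
    using that by (auto simp: transport_outside)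
  then have "(\<Sum>x\<in>pairs_B. \<Sum>y\<in>pairs_B. ?T x y) = (\<Sum>u\<in>pairs_A. \<Sum>v\<in>pairs_A. ?T (star_pair u) (star_pair v))"
    by (rule sum_pairs_B_eq_sum_pairs_A)
  also have "\<dots> = (\<Sum>u\<in>pairs_A. \<Sum>v\<in>pairs_A. f u * g v * bracket_coeff QB (rad2_rels QB) c \<eta> (star_pair u) (star_pair v))"
    by (intro sum.cong refl) (simp add: transport_star_pair)
  finally have bracket_B: "bracket QB (rad2_rels QB) (transport f) (transport g) z = (if (c, \<eta>) \<in> pairs_B
      then \<Sum>u\<in>pairs_A. \<Sum>v\<in>pairs_A. f u * g v * bracket_coeff QB (rad2_rels QB) c \<eta> (star_pair u) (star_pair v)
      else 0)"
    by (simp add: bracket_eq z)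
  show "bracket QB (rad2_rels QB) (transport f) (transport g) z = transport (bracket Q (rad2_rels Q) f g) z"
  proof (cases "z \<in> star_pair ` pairs_A")
    case True
    then obtain \<eta>\<^sub>A where z_A: "(c, \<eta>\<^sub>A) \<in> pairs_A" and \<eta>: "\<eta> = star \<eta>\<^sub>A"
      by (auto simp: z star_pair_def)
    have "bracket QB (rad2_rels QB) (transport f) (transport g) z = bracket Q (rad2_rels Q) f g (c, \<eta>\<^sub>A)"
      using bracket_B star_pair_mem_pairs_B[OF z_A] z_A
      by (simp add: bracket_eq \<eta> bracket_coeff_star_pair[OF z_A])
    also have "\<dots> = transport (bracket Q (rad2_rels Q) f g) z"
      using transport_star_pair[OF z_A, of "bracket Q (rad2_rels Q) f g"] by (simp add: z \<eta>)
    finally show ?thesis .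
  next
    case False
    then have outside: "(c, \<eta>) \<notin> star_pair ` pairs_A" by (simp add: z)
    have "(\<Sum>u\<in>pairs_A. \<Sum>v\<in>pairs_A.
        f u * g v * bracket_coeff QB (rad2_rels QB) c \<eta> (star_pair u) (star_pair v)) = 0"
      by (intro sum.neutral ballI) (simp add: bracket_coeff_glued_outside[OF outside])
    then show ?thesis
      using bracket_B transport_outside[OF False, of "bracket Q (rad2_rels Q) f g"] by simp
  qed
qed

lemma transport_supported:
  assumes "f \<in> supported_on K" "K \<subseteq> pairs_A"
  shows "transport f \<in> supported_on (star_pair ` K)"
  unfolding supported_on_def
proof (intro CollectI allI impI)
  fix y assume y: "y \<notin> star_pair ` K"
  show "transport f y = 0"
  proof (cases "y \<in> star_pair ` pairs_A")
    case True
    then obtain x where x: "x \<in> pairs_A" "y = star_pair x" by blast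
    then have "x \<notin> K" using y by blast
    then show ?thesis
      using transport_star_pair[OF x(1), of f] supported_onD[OF assms(1)] x(2) by simp
  qed (rule transport_outside)
qed

lemma transport_surj:
  assumes y: "y \<in> supported_on (star_pair ` K)" and K: "K \<subseteq> pairs_A"
  shows "\<exists>x\<in>supported_on K. transport x = y"
proof
  define x where "x z = (if z \<in> K then y (star_pair z) else 0)" for z
  show "x \<in> supported_on K" by (simp add: x_def supported_on_def)
  show "transport x = y"
  proof
    fix w show "transport x w = y w"
    proof (cases "w \<in> star_pair ` pairs_A")
      case True
      then obtain z where z: "z \<in> pairs_A" "w = star_pair z" by blast
      have "x z = y w"
      proof (cases "z \<in> K")
        case False
        have "w \<notin> star_pair ` K"
        proof
          assume "w \<in> star_pair ` K"
          then obtain z' where "z' \<in> K" "star_pair z' = star_pair z" using z(2) by blast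
          then show False
            using inj_onD[OF inj_on_star_pair] z(1) K False by blast
        qed
        then show ?thesis using False supported_onD[OF y] by (simp add: x_def)
      qed (simp add: x_def z(2))
      then show ?thesis using transport_star_pair[OF z(1), of x] z(2) by simp
    next
      case False
      then have "w \<notin> star_pair ` K" using K by blast
      then show ?thesis using supported_onD[OF y] transport_outside[OF False] by simp
    qed
  qed
qed

text \<open>On different blocks, any coboundary of \<open>A\<close> is the coboundary of a function taking the
  same value at \<open>e\<^sub>1\<close> and \<open>e\<^sub>n\<close> (subtract a multiple of the indicator of the block of \<open>e\<^sub>1\<close>),
  which descends to \<open>B\<close>.\<close>
lemma transport_mem_im_vertex_coboundary_iff:
  fixes f :: "'e \<times> ('v, 'e) path \<Rightarrow> 'k::field"
  assumes different: "\<not> same_block Q e1 en" and f: "f \<in> supported_on pairs_A"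
  shows "transport f \<in> vertex_coboundary QB ` supported_on (verts QB)
    \<longleftrightarrow> f \<in> vertex_coboundary Q ` supported_on (verts Q)"
proof
  assume "transport f \<in> vertex_coboundary QB ` supported_on (verts QB)"
  then obtain h where "transport f = vertex_coboundary QB h" by blast
  then have "transport f = transport (vertex_coboundary Q (\<lambda>v. h (\<pi> v)))"
    by (simp only: transport_vertex_coboundary)
  then have "f = vertex_coboundary Q (\<lambda>v. h (\<pi> v))"
    by (rule transport_inj[OF f vertex_coboundary_supported])
  also have "\<dots> = vertex_coboundary Q (\<lambda>v. if v \<in> verts Q then h (\<pi> v) else 0)"
    by (rule vertex_coboundary_cong[OF finite_Q]) simp
  finally show "f \<in> vertex_coboundary Q ` supported_on (verts Q)"
    by (auto simp: supported_on_def)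
next
  assume "f \<in> vertex_coboundary Q ` supported_on (verts Q)"
  then obtain h where f_eq: "f = vertex_coboundary Q h" by blast
  let ?i = "\<lambda>v. of_bool ((e1, v) \<in> conn Q) :: 'k"
  define h' where "h' v = h v - (h e1 - h en) * ?i v" for v
  have "(e1, e1) \<in> conn Q" using equiv_class_self[OF equiv_conn[OF finite_Q] e1_vert] by simp
  then have h'_ends: "h' e1 = h' en" using different by (simp add: h'_def same_block_def)
  have "vertex_coboundary Q ?i = (0 :: _ \<Rightarrow> 'k)"
    using block_indicator_locally_constant[OF finite_Q] kernel_vertex_coboundary[OF finite_Q] by blast
  moreover have "vertex_coboundary Q h' = vertex_coboundary Q h - fscale (h e1 - h en) (vertex_coboundary Q ?i)"
    by (auto simp: vertex_coboundary_def h'_def fun_eq_iff algebra_simps)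
  ultimately have "vertex_coboundary Q h' = f" by (simp add: f_eq)
  define h\<^sub>B where "h\<^sub>B w = (if w \<in> verts QB then h' w else 0)" for w
  have "h\<^sub>B (\<pi> v) = h' v" if "v \<in> verts Q" for v
    using that h'_ends imageI[OF that, of \<pi>] by (cases "v = en") (auto simp: h\<^sub>B_def glue_vert_eq_self)
  then have "vertex_coboundary Q (\<lambda>v. h\<^sub>B (\<pi> v)) = vertex_coboundary Q h'"
    by (intro vertex_coboundary_cong[OF finite_Q]) simp
  then have "transport f = vertex_coboundary QB h\<^sub>B"
    using transport_vertex_coboundary[of h\<^sub>B] \<open>vertex_coboundary Q h' = f\<close> by simp
  moreover have "h\<^sub>B \<in> supported_on (verts QB)" by (simp add: h\<^sub>B_def supported_on_def)
  ultimately show "transport f \<in> vertex_coboundary QB ` supported_on (verts QB)" by blast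
qed

theorem hh1_lie_iso_glued:
  assumes no_lonely: "no_lonely_end_loop ((2::'k::field) = 0)" and different: "\<not> same_block Q e1 en"
    and no_loops: "\<not> (has_loop Q e1 \<and> has_loop Q en)"
  shows "hh1_lie_iso TYPE('k) Q (rad2_rels Q) QB (glue_rels Q e1 en)"
proof -
  let ?K = "cocycle_pairs ((2::'k) = 0) Q"
  have K: "?K \<subseteq> pairs_A" by (rule cocycle_pairs_subset)
  have ker_A: "ker_delta1 Q (rad2_rels Q) = (supported_on ?K :: (_ \<Rightarrow> 'k) set)"
    by (rule ker_delta1_rad2[OF finite_Q])
  have ker_B: "ker_delta1 QB (rad2_rels QB) = (supported_on (star_pair ` ?K) :: (_ \<Rightarrow> 'k) set)"
    unfolding ker_delta1_rad2[OF finite_glued] cocycle_pairs_glued_different_blocks[OF no_lonely different no_loops] ..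
  have supp_A: "x \<in> supported_on pairs_A" if "x \<in> (supported_on ?K :: (_ \<Rightarrow> 'k) set)" for x
    using that K unfolding supported_on_def by blast
  have zero: "(0 :: _ \<Rightarrow> 'k) \<in> vertex_coboundary QB ` supported_on (verts QB)"
    by (rule image_eqI[of _ _ 0]) (simp_all add: supported_on_def)
  show ?thesis
    unfolding hh1_lie_iso_def glue_rels_eq_rad2_rels ker_A ker_B
      im_delta0_rad2[OF finite_Q] im_delta0_rad2[OF finite_glued]
  proof (intro exI[of _ transport] conjI ballI allI)
    fix x :: "_ \<Rightarrow> 'k" assume x: "x \<in> supported_on ?K"
    show "transport x \<in> supported_on (star_pair ` ?K)" by (rule transport_supported[OF x K])
    show "transport x \<in> vertex_coboundary QB ` supported_on (verts QB)
      \<longleftrightarrow> x \<in> vertex_coboundary Q ` supported_on (verts Q)"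
      by (rule transport_mem_im_vertex_coboundary_iff[OF different supp_A[OF x]])
    fix y :: "_ \<Rightarrow> 'k" assume "y \<in> supported_on ?K"
    show "transport (x + y) = transport x + transport y" by (rule transport_add)
    show "bracket QB (rad2_rels QB) (transport x) (transport y) - transport (bracket Q (rad2_rels Q) x y)
      \<in> vertex_coboundary QB ` supported_on (verts QB)"
      using zero by (simp add: bracket_transport)
  next
    fix c and x :: "_ \<Rightarrow> 'k"
    show "transport (fscale c x) = fscale c (transport x)" by (rule transport_scale)
  next
    fix y :: "_ \<Rightarrow> 'k" assume "y \<in> supported_on (star_pair ` ?K)"
    then obtain x where "x \<in> supported_on ?K" "transport x = y" using transport_surj[OF _ K] by blast
    moreover from this have "transport x - y = 0" by simp
    ultimately show "\<exists>x\<in>supported_on ?K. transport x - y \<in> vertex_coboundary QB ` supported_on (verts QB)"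
      using zero by metis
  qed
qed

end

theorem corollary3p26:
  fixes Q :: "('v, 'a) quiver" and e1 en :: 'v
  assumes "finite (verts Q)" and "finite (arrs Q)"
    and "\<forall>a\<in>arrs Q. src Q a \<in> verts Q \<and> tgt Q a \<in> verts Q"
    and "e1 \<in> verts Q" and "en \<in> verts Q" and "e1 \<noteq> en"
    and "\<exists>a\<in>arrs Q. src Q a = e1 \<or> tgt Q a = e1"
    and "\<exists>a\<in>arrs Q. src Q a = en \<or> tgt Q a = en"
  defines "QB \<equiv> glue_quiver Q e1 en" and "ZA \<equiv> rad2_rels Q" and "ZB' \<equiv> glue_rels Q e1 en"
  defines "dA \<equiv> hh1_dim TYPE('k::field) Q ZA" and "dB \<equiv> hh1_dim TYPE('k) QB ZB'"
    and "s \<equiv> int (kspp TYPE('k) Q e1 en)"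
    and "cA \<equiv> int (num_components Q)" and "cB \<equiv> int (num_components QB)"
    and "good \<equiv> (2::'k) \<noteq> 0 \<or> same_block Q e1 en
                 \<or> (\<not> same_block Q e1 en \<and> \<not> block_is_dual_numbers Q e1
                    \<and> \<not> block_is_dual_numbers Q en)"
  shows "good \<longrightarrow>
           (dA = dB - 1 - s - cB + cA)
         \<and> (same_block Q e1 en \<longrightarrow> dA = dB - 1 - s)
         \<and> (\<not> same_block Q e1 en \<longrightarrow>
               dA = dB - s
             \<and> (\<not> (has_loop Q e1 \<and> has_loop Q en) \<longrightarrow> hh1_lie_iso TYPE('k) Q ZA QB ZB'))"
proof -
  have Q: "finite_quiver Q" using assms(1-3) by (simp add: finite_quiver_def)
  interpret vertex_gluing Q e1 en
    by unfold_locales (use Q assms(4-8) in auto)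
  have no_lonely: "no_lonely_end_loop ((2::'k) = 0)" if "good"
    using that unfolding assms(17) by (rule no_lonely_end_loop_if_good)
  have dim: "dA = dB - 1 - s - cB + cA" if "good"
    unfolding assms(9-16) by (rule hh1_dim_glued[OF no_lonely[OF that]])
  show ?thesis
  proof (intro impI conjI)
    assume "good"
    then show "dA = dB - 1 - s - cB + cA" by (rule dim)
  next
    assume "good" "same_block Q e1 en"
    then show "dA = dB - 1 - s"
      using dim num_components_glued_same_block unfolding assms(9,15,16) by simp
  next
    assume "good" "\<not> same_block Q e1 en"
    then show "dA = dB - s"
      using dim num_components_glued_different_blocks unfolding assms(9,15,16) by simp
  next
    assume "good" "\<not> same_block Q e1 en" "\<not> (has_loop Q e1 \<and> has_loop Q en)"
    then show "hh1_lie_iso TYPE('k) Q ZA QB ZB'"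
      unfolding assms(9-11) using hh1_lie_iso_glued no_lonely by blast
  qed
qed

end
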